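(* Let $W:\mathrm{dom}(W)\to\mathcal{H}$ be a self-adjoint operator on a separable Hilbert space $\mathcal{H}$ such that $0\notin\mathrm{spec}(W)$, and let $\mathcal{H}_W$ be the associated Krein space. Then: (i) $\mathcal{H}_W$ can be identified with $\mathrm{dom}(\sqrt{|W|})\subset\mathcal{H}$; precisely, $\mathrm{dom}(\sqrt{|W|})$ equipped with the norm $h\mapsto\|\sqrt{|W|}h\|$ is complete, and it contains $\mathrm{dom}(W)$ as a dense subspace on which this norm coincides with $\|\cdot\|_J$. (ii) Under this identification, $\sqrt{|W|}:\mathrm{dom}(\sqrt{|W|})=\mathcal{H}_W\to\mathcal{H}$ is a unitary operator from $(\mathcal{H}_W,[\cdot,\cdot]_J)$ onto $(\mathcal{H},\langle\cdot,\cdot\rangle)$. (iii) A sequence $\{k_n\}_{n\in\mathbb{N}}\subset\mathcal{H}$ is a frame for the Hilbert space $\mathcal{H}$ with frame bounds $A\le B$ if and only if $\{\sqrt{|W|}^{\,-1}k_n\}_{n\in\mathbb{N}}\subset\mathcal{H}_W$ is a frame for the Krein space $\mathcal{H}_W$ with frame bounds $A\le B$.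
   Context: For a (possibly unbounded) self-adjoint $W$ on $\mathcal{H}$ with $\ker W=\{0\}$ and polar decomposition $W=J|W|$ ($J$ self-adjoint unitary), define on $\mathrm{dom}(W)$: $[f,g]:=\langle f,Wg\rangle$, $[f,g]_J:=\langle f,|W|g\rangle$, $\|f\|_J:=\sqrt{[f,f]_J}$. $\mathcal{H}_W$ is the completion of $\mathrm{dom}(W)$ with respect to $\|\cdot\|_J$, with $[\cdot,\cdot]$, $[\cdot,\cdot]_J$, $J$ extended by continuity; it is a Krein space with fundamental symmetry $J$. A sequence $\{k_n\}\subset\mathcal{H}_W$ is a frame for the Krein space $\mathcal{H}_W$ with frame bounds $0<A\le B<\infty$ if $A\|k\|_J^2\le\sum_n|[k_n,k]|^2\le B\|k\|_J^2$ for all $k\in\mathcal{H}_W$; a frame for the Hilbert space $\mathcal{H}$ with frame bounds $A\le B$ satisfies $A\|f\|^2\le\sum_n|\langle k_n,f\rangle|^2\le B\|f\|^2$ for all $f\in\mathcal{H}$. *)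

theory Defs
  imports "HOL-Analysis.Analysis"
begin

text \<open>The distribution has no complex Hilbert spaces, so we introduce them as a type class:
 a real normed vector space with a complex scalar multiplication extending the real one and a
 complex inner product (antilinear in the first, linear in the second argument) inducing the norm.\<close>

class complex_inner = real_normed_vector +
  fixes scaleC :: "complex \<Rightarrow> 'a \<Rightarrow> 'a"
  fixes cinner :: "'a \<Rightarrow> 'a \<Rightarrow> complex"
  assumes scaleC_add_right: "scaleC a (x + y) = scaleC a x + scaleC a y"
    and scaleC_add_left: "scaleC (a + b) x = scaleC a x + scaleC b x"
    and scaleC_scaleC: "scaleC a (scaleC b x) = scaleC (a * b) x"
    and scaleC_one: "scaleC 1 x = x"
    and scaleC_of_real: "scaleC (complex_of_real r) x = scaleR r x"
    and cinner_conj: "cinner x y = cnj (cinner y x)"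
    and cinner_add_right: "cinner x (y + z) = cinner x y + cinner x z"
    and cinner_scaleC_right: "cinner x (scaleC a y) = a * cinner x y"
    and cinner_self: "cinner x x = complex_of_real ((norm x)\<^sup>2)"

class chilbert = complex_inner + complete_space

text \<open>Non-vacuity: the complex numbers form a complex Hilbert space.\<close>
instantiation complex :: complex_inner
begin
definition scaleC_complex :: "complex \<Rightarrow> complex \<Rightarrow> complex" where "scaleC_complex a x = a * x"
definition cinner_complex :: "complex \<Rightarrow> complex \<Rightarrow> complex" where "cinner_complex x y = cnj x * y"
instance
proof
  fix a b :: complex and x y z :: complex and r :: real
  show "scaleC a (x + y) = scaleC a x + scaleC a y" by (simp add: scaleC_complex_def distrib_left)
  show "scaleC (a + b) x = scaleC a x + scaleC b x" by (simp add: scaleC_complex_def distrib_right)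
  show "scaleC a (scaleC b x) = scaleC (a * b) x" by (simp add: scaleC_complex_def mult.assoc)
  show "scaleC 1 x = x" by (simp add: scaleC_complex_def)
  show "scaleC (complex_of_real r) x = r *\<^sub>R x" by (simp add: scaleC_complex_def scaleR_conv_of_real)
  show "cinner x y = cnj (cinner y x)" by (simp add: cinner_complex_def mult.commute)
  show "cinner x (y + z) = cinner x y + cinner x z" by (simp add: cinner_complex_def distrib_left)
  show "cinner x (scaleC a y) = a * cinner x y" by (simp add: cinner_complex_def scaleC_complex_def)
  show "cinner x x = complex_of_real ((norm x)\<^sup>2)"
    by (simp only: cinner_complex_def complex_norm_square mult.commute)
qed
end
instance complex :: chilbert ..

text \<open>An (unbounded) operator on the type is a partial map; its domain is \<open>dom W\<close>
 and composition \<open>\<circ>\<^sub>m\<close> is the operator product with its natural domain.\<close>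

type_synonym 'a op = "'a \<Rightarrow> 'a option"

definition lin_op :: "'a::complex_inner op \<Rightarrow> bool" where
  "lin_op W \<longleftrightarrow> 0 \<in> dom W \<and>
     (\<forall>x\<in>dom W. \<forall>y\<in>dom W. x + y \<in> dom W \<and> the (W (x + y)) = the (W x) + the (W y)) \<and>
     (\<forall>a. \<forall>x\<in>dom W. scaleC a x \<in> dom W \<and> the (W (scaleC a x)) = scaleC a (the (W x)))"

definition adjoint_op :: "'a::complex_inner op \<Rightarrow> 'a op" where
  "adjoint_op W = (\<lambda>g. if \<exists>h. \<forall>f\<in>dom W. cinner (the (W f)) g = cinner f h
                        then Some (THE h. \<forall>f\<in>dom W. cinner (the (W f)) g = cinner f h)
                        else None)"

definition self_adjoint_op :: "'a::complex_inner op \<Rightarrow> bool" where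
  "self_adjoint_op W \<longleftrightarrow> lin_op W \<and> closure (dom W) = UNIV \<and> adjoint_op W = W"

definition positive_op :: "'a::complex_inner op \<Rightarrow> bool" where
  "positive_op A \<longleftrightarrow> (\<forall>f\<in>dom A. \<exists>r\<ge>0. cinner f (the (A f)) = complex_of_real r)"

definition op_spectrum :: "'a::complex_inner op \<Rightarrow> complex set" where
  "op_spectrum W = {z. \<not> (bij_betw (\<lambda>x. the (W x) - scaleC z x) (dom W) UNIV \<and>
       (\<exists>C. \<forall>x\<in>dom W. norm x \<le> C * norm (the (W x) - scaleC z x)))}"

definition op_sqrt :: "'a::complex_inner op \<Rightarrow> 'a op" where
  "op_sqrt A = (THE S. self_adjoint_op S \<and> positive_op S \<and> S \<circ>\<^sub>m S = A)"

definition op_abs :: "'a::complex_inner op \<Rightarrow> 'a op" where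
  "op_abs W = op_sqrt (W \<circ>\<^sub>m W)"

definition krein_S :: "'a::complex_inner op \<Rightarrow> 'a op" where
  "krein_S W = op_sqrt (op_abs W)"

definition krein_Jnorm :: "'a::complex_inner op \<Rightarrow> 'a \<Rightarrow> real" where
  "krein_Jnorm W f = sqrt (Re (cinner f (the (op_abs W f))))"

text \<open>Extension by continuity of a form given on \<open>dom W\<close> to \<open>dom (sqrt |W|)\<close>, where
 \<open>dom (sqrt |W|)\<close> carries the norm \<open>h \<mapsto> \<parallel>sqrt|W| h\<parallel>\<close> (the identification of part (i)).\<close>
definition ext_form :: "'a::complex_inner op \<Rightarrow> ('a \<Rightarrow> 'a \<Rightarrow> complex) \<Rightarrow> 'a \<Rightarrow> 'a \<Rightarrow> complex" where
  "ext_form W \<phi> f g = (THE c. \<forall>fs gs. (\<forall>n. fs n \<in> dom W \<and> gs n \<in> dom W) \<and>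
      (\<lambda>n. norm (the (krein_S W (fs n - f)))) \<longlonglongrightarrow> 0 \<and>
      (\<lambda>n. norm (the (krein_S W (gs n - g)))) \<longlonglongrightarrow> 0 \<longrightarrow>
      (\<lambda>n. \<phi> (fs n) (gs n)) \<longlonglongrightarrow> c)"

text \<open>Indefinite product \<open>[f,g] = \<langle>f,Wg\<rangle>\<close> and \<open>[f,g]_J = \<langle>f,|W|g\<rangle>\<close>, extended by continuity.\<close>
definition krein_ip :: "'a::complex_inner op \<Rightarrow> 'a \<Rightarrow> 'a \<Rightarrow> complex" where
  "krein_ip W = ext_form W (\<lambda>f g. cinner f (the (W g)))"

definition krein_Jip :: "'a::complex_inner op \<Rightarrow> 'a \<Rightarrow> 'a \<Rightarrow> complex" where
  "krein_Jip W = ext_form W (\<lambda>f g. cinner f (the (op_abs W g)))"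

definition krein_Jnorm_ext :: "'a::complex_inner op \<Rightarrow> 'a \<Rightarrow> real" where
  "krein_Jnorm_ext W k = sqrt (Re (krein_Jip W k k))"

definition hilbert_frame :: "(nat \<Rightarrow> 'a::complex_inner) \<Rightarrow> real \<Rightarrow> real \<Rightarrow> bool" where
  "hilbert_frame ks A B \<longleftrightarrow> 0 < A \<and> A \<le> B \<and>
     (\<forall>f. summable (\<lambda>n. (cmod (cinner (ks n) f))\<^sup>2) \<and>
          A * (norm f)\<^sup>2 \<le> (\<Sum>n. (cmod (cinner (ks n) f))\<^sup>2) \<and>
          (\<Sum>n. (cmod (cinner (ks n) f))\<^sup>2) \<le> B * (norm f)\<^sup>2)"

definition krein_frame :: "'a::complex_inner op \<Rightarrow> (nat \<Rightarrow> 'a) \<Rightarrow> real \<Rightarrow> real \<Rightarrow> bool" where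
  "krein_frame W ks A B \<longleftrightarrow> 0 < A \<and> A \<le> B \<and> (\<forall>n. ks n \<in> dom (krein_S W)) \<and>
     (\<forall>k\<in>dom (krein_S W). summable (\<lambda>n. (cmod (krein_ip W (ks n) k))\<^sup>2) \<and>
          A * (krein_Jnorm_ext W k)\<^sup>2 \<le> (\<Sum>n. (cmod (krein_ip W (ks n) k))\<^sup>2) \<and>
          (\<Sum>n. (cmod (krein_ip W (ks n) k))\<^sup>2) \<le> B * (krein_Jnorm_ext W k)\<^sup>2)"

end

theory Submission
  imports Defs
begin

text \<open>
  Since \<open>0\<close> is in the resolvent set, \<open>T = W\<^sup>-\<^sup>1\<close> is a bounded self-adjoint operator, and so are
  \<open>M = |W|\<^sup>-\<^sup>1 = sqrt (T\<^sup>2)\<close> and \<open>K = sqrt M = sqrt |W|\<^sup>-\<^sup>1\<close>; square roots of bounded positive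
  operators are obtained from the binomial series of \<open>sqrt (1 - t)\<close>. The operator \<open>sqrt |W|\<close>
  is then the inverse of the injective map \<open>K\<close>, so its domain is the range of \<open>K\<close> and
  \<open>h \<mapsto> \<parallel>sqrt |W| h\<parallel>\<close> is the norm of \<open>\<H>\<close> transported along \<open>K\<close>: completeness and unitarity
  are immediate. The fundamental symmetry \<open>J\<close>, the continuous extension of \<open>M u \<mapsto> T u\<close>, is
  an isometric involution commuting with \<open>K\<close> with \<open>W = J |W|\<close>; it gives
  \<open>[K a, K b] = \<langle>a, J b\<rangle>\<close> and \<open>[K a, K b]\<^sub>J = \<langle>a, b\<rangle>\<close>, and the frame equivalence follows by
  substituting \<open>f = J b\<close>.
\<close>

instance chilbert \<subseteq> banach ..

lemma cinner_add_left: "cinner (x + y) z = cinner x z + cinner (y::'a::complex_inner) z"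
  by (simp add: cinner_conj[of "x+y" z] cinner_conj[of x z] cinner_conj[of y z] cinner_add_right)

lemma cinner_scaleC_left: "cinner (scaleC a x) (y::'a::complex_inner) = cnj a * cinner x y"
  by (simp add: cinner_conj[of "scaleC a x" y] cinner_conj[of x y] cinner_scaleC_right)

lemma cinner_zero_right [simp]: "cinner (x::'a::complex_inner) 0 = 0"
  using cinner_add_right[of x 0 0] by simp

lemma cinner_diff_right: "cinner x (y - z) = cinner x y - cinner x (z::'a::complex_inner)"
  using cinner_add_right[of x "y - z" z] by simp

lemma cinner_diff_left: "cinner (x - y) z = cinner x z - cinner y (z::'a::complex_inner)"
  using cinner_add_left[of "x - y" y z] by simp

lemma cinner_scaleR_right: "cinner x (r *\<^sub>R y) = of_real r * cinner x (y::'a::complex_inner)"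
  by (simp add: cinner_scaleC_right flip: scaleC_of_real)

lemma cinner_scaleR_left: "cinner (r *\<^sub>R x) y = of_real r * cinner x (y::'a::complex_inner)"
  by (simp add: cinner_scaleC_left flip: scaleC_of_real)

lemma Re_cinner_self: "Re (cinner x x) = (norm (x::'a::complex_inner))\<^sup>2"
  by (simp add: cinner_self)

lemma cinner_self_eq_zero_iff: "cinner x x = 0 \<longleftrightarrow> (x::'a::complex_inner) = 0"
  by (simp add: cinner_self)

lemma scaleC_zero_left [simp]: "scaleC 0 (x::'a::complex_inner) = 0"
  using scaleC_of_real[of 0 x] by simp

lemma scaleC_diff_right: "scaleC a (x - y) = scaleC a x - scaleC a (y::'a::complex_inner)"
  using scaleC_add_right[of a "x - y" y] by simp

lemma scaleC_scaleR_commute: "scaleC a (r *\<^sub>R x) = r *\<^sub>R scaleC a (x::'a::complex_inner)"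
  by (simp add: scaleC_scaleC mult.commute flip: scaleC_of_real)

lemma norm_scaleC: "norm (scaleC a (x::'a::complex_inner)) = cmod a * norm x"
proof -
  have "of_real ((norm (scaleC a x))\<^sup>2) = cnj a * a * cinner x x"
    unfolding cinner_self [symmetric] cinner_scaleC_left cinner_scaleC_right by (simp add: mult_ac)
  also have "\<dots> = of_real ((cmod a * norm x)\<^sup>2)"
    by (simp only: complex_norm_square cinner_self power_mult_distrib of_real_mult mult.commute)
  finally have "(norm (scaleC a x))\<^sup>2 = (cmod a * norm x)\<^sup>2" by (simp only: of_real_eq_iff)
  then show ?thesis by (simp add: power2_eq_iff_nonneg)
qed

lemma discriminant_le_of_nonneg_quadratic:
  fixes a b c :: real
  assumes q: "\<And>t. 0 \<le> a + 2*t*b + t\<^sup>2*c" and c: "0 \<le> c"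
  shows "b\<^sup>2 \<le> a * c"
proof (cases "c = 0")
  case True
  have "b = 0"
  proof (rule ccontr)
    assume "b \<noteq> 0"
    have "0 \<le> a + 2*(-(a+1)/(2*b))*b + (-(a+1)/(2*b))\<^sup>2*c" by (rule q)
    with True \<open>b \<noteq> 0\<close> show False by (simp add: field_simps)
  qed
  with True show ?thesis by simp
next
  case False
  with c have "c > 0" by simp
  have "0 \<le> a + 2*(-b/c)*b + (-b/c)\<^sup>2*c" by (rule q)
  also have "\<dots> = a - b\<^sup>2/c" using \<open>c > 0\<close> by (simp add: field_simps power2_eq_square)
  finally show ?thesis using \<open>c > 0\<close> by (simp add: field_simps)
qed

definition clinear :: "('a::complex_inner \<Rightarrow> 'a) \<Rightarrow> bool" where
  "clinear L \<longleftrightarrow> (\<forall>x y. L (x + y) = L x + L y) \<and> (\<forall>a x. L (scaleC a x) = scaleC a (L x))"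

definition bounded_map :: "('a::complex_inner \<Rightarrow> 'a) \<Rightarrow> bool" where
  "bounded_map L \<longleftrightarrow> (\<exists>C. \<forall>x. norm (L x) \<le> C * norm x)"

definition hermitian :: "('a::complex_inner \<Rightarrow> 'a) \<Rightarrow> bool" where
  "hermitian L \<longleftrightarrow> (\<forall>x y. cinner (L x) y = cinner x (L y))"

definition positive_map :: "('a::complex_inner \<Rightarrow> 'a) \<Rightarrow> bool" where
  "positive_map L \<longleftrightarrow> (\<forall>x. 0 \<le> Re (cinner x (L x)))"

definition bounded_positive :: "('a::complex_inner \<Rightarrow> 'a) \<Rightarrow> bool" where
  "bounded_positive L \<longleftrightarrow> clinear L \<and> bounded_map L \<and> hermitian L \<and> positive_map L"

lemma clinear_add: "clinear L \<Longrightarrow> L (x + y) = L x + L y"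
  by (simp add: clinear_def)

lemma clinear_scaleC: "clinear L \<Longrightarrow> L (scaleC a x) = scaleC a (L x)"
  by (simp add: clinear_def)

lemma clinear_zero: "clinear L \<Longrightarrow> L 0 = 0"
  using clinear_add[of L 0 0] by simp

lemma clinear_diff: "clinear L \<Longrightarrow> L (x - y) = L x - L y"
  using clinear_add[of L "x - y" y] by (simp add: eq_diff_eq)

lemma clinear_scaleR: "clinear L \<Longrightarrow> L (r *\<^sub>R x) = r *\<^sub>R L x"
  by (metis clinear_scaleC scaleC_of_real)

lemma clinear_sum: "clinear L \<Longrightarrow> L (sum f A) = (\<Sum>i\<in>A. L (f i))"
  by (induction A rule: infinite_finite_induct) (simp_all add: clinear_zero clinear_add)

lemma clinear_compose: "clinear A \<Longrightarrow> clinear B \<Longrightarrow> clinear (\<lambda>x. A (B x))"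
  by (simp add: clinear_def)

lemma clinear_funpow: "clinear B \<Longrightarrow> clinear (B ^^ k)"
  by (induction k) (simp_all add: clinear_def)

lemma bounded_map_pos_bound: "bounded_map L \<Longrightarrow> \<exists>C>0. \<forall>x. norm (L x) \<le> C * norm x"
proof -
  assume "bounded_map L"
  then obtain C where C: "\<And>x. norm (L x) \<le> C * norm x" by (auto simp: bounded_map_def)
  have "norm (L x) \<le> (max C 0 + 1) * norm x" for x
    by (rule order_trans[OF C[of x]]) (intro mult_right_mono, auto)
  then show ?thesis by (intro exI[of _ "max C 0 + 1"]) auto
qed

lemma bounded_map_compose:
  assumes "bounded_map A" "bounded_map B" shows "bounded_map (\<lambda>x. A (B x))"
proof -
  obtain C where "C > 0" and C: "\<And>x. norm (A x) \<le> C * norm x"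
    using bounded_map_pos_bound[OF assms(1)] by auto
  obtain D where D: "\<And>x. norm (B x) \<le> D * norm x" using assms(2) by (auto simp: bounded_map_def)
  have "norm (A (B x)) \<le> (C * D) * norm x" for x
    using order_trans[OF C[of "B x"] mult_left_mono[OF D[of x]]] \<open>C > 0\<close> by (simp add: mult.assoc)
  then show ?thesis by (auto simp: bounded_map_def)
qed

lemma clinear_bounded_map_imp_bounded_linear: "clinear L \<Longrightarrow> bounded_map L \<Longrightarrow> bounded_linear L"
proof -
  assume L: "clinear L" "bounded_map L"
  then obtain C where C: "\<And>x. norm (L x) \<le> C * norm x" by (auto simp: bounded_map_def)
  show ?thesis
    by (rule bounded_linear_intro[of _ C]) (use L C in \<open>auto simp: clinear_add clinear_scaleR mult.commute\<close>)
qed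

lemma clinear_bounded_map_continuous_on: "clinear L \<Longrightarrow> bounded_map L \<Longrightarrow> continuous_on S L"
  by (intro linear_continuous_on clinear_bounded_map_imp_bounded_linear)

lemma hermitian_funpow: assumes "hermitian B" shows "hermitian (B ^^ k)"
proof (induction k)
  case 0 then show ?case by (simp add: hermitian_def)
next
  case (Suc k)
  have "cinner (B ((B ^^ k) x)) y = cinner x (B ((B ^^ k) y))" for x y
  proof -
    have "cinner (B ((B ^^ k) x)) y = cinner ((B ^^ k) x) (B y)" using assms by (simp add: hermitian_def)
    also have "\<dots> = cinner x ((B ^^ k) (B y))" using Suc by (simp add: hermitian_def)
    finally show ?thesis by (simp add: funpow_swap1)
  qed
  then show ?case by (simp add: hermitian_def)
qed

lemma hermitian_cinner_real: "hermitian L \<Longrightarrow> cinner x (L x) = of_real (Re (cinner x (L x)))"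
proof -
  assume "hermitian L"
  then have "cinner x (L x) = cnj (cinner x (L x))"
    using cinner_conj[of "L x" x] by (simp add: hermitian_def)
  then have "Im (cinner x (L x)) = 0" by (metis cnj.simps(2) neg_equal_zero)
  then show ?thesis by (simp add: complex_eq_iff)
qed

lemma positive_form_Cauchy_Schwarz:
  assumes l: "clinear B" and s: "hermitian B" and p: "positive_map B"
  shows "(Re (cinner x (B y)))\<^sup>2 \<le> Re (cinner x (B x)) * Re (cinner y (B y))"
proof (rule discriminant_le_of_nonneg_quadratic)
  fix t :: real
  have "Re (cinner y (B x)) = Re (cinner x (B y))"
    using s cinner_conj[of x "B y"] by (simp add: hermitian_def)
  moreover have "cinner (x + t *\<^sub>R y) (B (x + t *\<^sub>R y)) =
      cinner x (B x) + of_real t * cinner x (B y) + of_real t * cinner y (B x) + of_real (t\<^sup>2) * cinner y (B y)"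
    using l by (simp add: clinear_add clinear_scaleR cinner_add_left cinner_add_right cinner_scaleR_left
        cinner_scaleR_right power2_eq_square algebra_simps)
  ultimately have "Re (cinner (x + t *\<^sub>R y) (B (x + t *\<^sub>R y))) =
      Re (cinner x (B x)) + 2 * t * Re (cinner x (B y)) + t\<^sup>2 * Re (cinner y (B y))"
    by simp
  then show "0 \<le> Re (cinner x (B x)) + 2 * t * Re (cinner x (B y)) + t\<^sup>2 * Re (cinner y (B y))"
    using p by (metis positive_map_def)
qed (use p in \<open>auto simp: positive_map_def\<close>)

lemma cinner_Cauchy_Schwarz: "cmod (cinner x y) \<le> norm (x::'a::complex_inner) * norm y"
proof (cases "cinner x y = 0")
  case True then show ?thesis by simp
next
  case False
  define c where "c = cinner x y"
  \<comment> \<open>rotate \<open>x\<close> so that the inner product becomes real and reduce to the real-part inequality\<close>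
  define w where "w = c / of_real (cmod c)"
  have cw: "cmod w = 1" using False by (simp add: w_def c_def norm_divide)
  have "cinner (scaleC w x) y = cnj w * c" by (simp add: cinner_scaleC_left c_def)
  also have "cnj w * c = of_real (cmod c)"
    using False by (simp add: w_def c_def power2_eq_square field_simps flip: complex_norm_square)
  finally have e: "Re (cinner (scaleC w x) y) = cmod c" by simp
  have "(cmod c)\<^sup>2 \<le> (norm x)\<^sup>2 * (norm y)\<^sup>2"
    using positive_form_Cauchy_Schwarz[of "\<lambda>x. x" "scaleC w x" y]
    by (simp add: clinear_def hermitian_def positive_map_def Re_cinner_self e norm_scaleC cw)
  then have "(cmod c)\<^sup>2 \<le> (norm x * norm y)\<^sup>2" by (simp add: power_mult_distrib)
  then show ?thesis unfolding c_def by (meson norm_ge_zero power2_le_imp_le zero_le_mult_iff)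
qed

lemma positive_map_form_zero:
  assumes "clinear B" "hermitian B" "positive_map B" "Re (cinner y (B y)) = 0"
  shows "B y = 0"
proof -
  have "(Re (cinner (B y) (B y)))\<^sup>2 \<le> Re (cinner (B y) (B (B y))) * Re (cinner y (B y))"
    using positive_form_Cauchy_Schwarz[OF assms(1-3), of "B y" y] .
  then have "((norm (B y))\<^sup>2)\<^sup>2 \<le> 0" using assms(4) by (simp add: Re_cinner_self)
  then show ?thesis by simp
qed

lemma bounded_linear_cinner_right: "bounded_linear (\<lambda>v::'a::complex_inner. cinner x v)"
  by (rule bounded_linear_intro[of _ "norm x"])
    (simp_all add: cinner_add_right cinner_scaleR_right scaleR_conv_of_real,
     metis cinner_Cauchy_Schwarz mult.commute)

lemma bounded_linear_cinner_left: "bounded_linear (\<lambda>v::'a::complex_inner. cinner v y)"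
  by (rule bounded_linear_intro[of _ "norm y"])
    (simp_all add: cinner_add_left cinner_scaleR_left scaleR_conv_of_real cinner_Cauchy_Schwarz)

lemma tendsto_cinner:
  fixes f g :: "'b \<Rightarrow> 'a::complex_inner"
  assumes "(f \<longlongrightarrow> a) F" "(g \<longlongrightarrow> b) F"
  shows "((\<lambda>n. cinner (f n) (g n)) \<longlongrightarrow> cinner a b) F"
proof -
  have "bounded_bilinear (\<lambda>x y::'a. cinner x y)"
  proof (rule bounded_bilinear.intro)
    show "\<exists>K. \<forall>a b. norm (cinner a b) \<le> norm a * norm b * K"
      by (rule exI[of _ 1]) (simp add: cinner_Cauchy_Schwarz)
  qed (simp_all add: cinner_add_left cinner_add_right cinner_scaleR_left cinner_scaleR_right scaleR_conv_of_real)
  then show ?thesis by (rule bounded_bilinear.tendsto[OF _ assms])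
qed

section \<open>The binomial series of \<open>sqrt (1 - t)\<close>\<close>

definition sqrt_coeff :: "nat \<Rightarrow> real" where
  "sqrt_coeff k = ((1/2) gchoose k) * (-1)^k"

lemma sqrt_coeff_0 [simp]: "sqrt_coeff 0 = 1"
  by (simp add: sqrt_coeff_def)

lemma sqrt_coeff_Suc: "sqrt_coeff (Suc k) = sqrt_coeff k * ((real k - 1/2) / (real k + 1))"
proof -
  have "(1/2::real) * ((1/2) gchoose k) = of_nat k * ((1/2) gchoose k) + of_nat (Suc k) * ((1/2) gchoose (Suc k))"
    by (rule gbinomial_mult_1)
  then have "(real k + 1) * ((1/2::real) gchoose (Suc k)) = (1/2 - real k) * ((1/2) gchoose k)"
    by (simp add: algebra_simps)
  then have e: "((1/2::real) gchoose (Suc k)) = ((1/2 - real k) / (real k + 1)) * ((1/2) gchoose k)"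
    by (simp add: field_simps)
  have "sqrt_coeff (Suc k) = - ((-1)^k * ((1/2::real) gchoose (Suc k)))" by (simp add: sqrt_coeff_def)
  also have "\<dots> = sqrt_coeff k * ((real k - 1/2) / (real k + 1))"
    unfolding e sqrt_coeff_def by (simp add: field_simps)
  finally show ?thesis .
qed

lemma sqrt_coeff_nonpos: "k \<ge> 1 \<Longrightarrow> sqrt_coeff k \<le> 0"
proof (induction k)
  case (Suc k)
  show ?case
  proof (cases "k = 0")
    case False
    with Suc have "sqrt_coeff k \<le> 0" by simp
    moreover have "(real k - 1/2) / (real k + 1) \<ge> 0" using False by simp
    ultimately show ?thesis unfolding sqrt_coeff_Suc by (rule mult_nonpos_nonneg)
  qed (simp add: sqrt_coeff_Suc)
qed simp

text \<open>The Cauchy square of the series is \<open>1 - t\<close> (Vandermonde's identity).\<close>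
lemma sqrt_coeff_Cauchy_product:
  "(\<Sum>i\<le>n. sqrt_coeff i * sqrt_coeff (n - i)) = (if n = 0 then 1 else if n = 1 then -1 else 0)"
proof -
  have "(\<Sum>i\<le>n. sqrt_coeff i * sqrt_coeff (n - i))
      = (\<Sum>i=0..n. ((1/2) gchoose i) * ((1/2) gchoose (n - i))) * (-1)^n"
    unfolding sum_distrib_right atMost_atLeast0
    by (rule sum.cong) (auto simp: sqrt_coeff_def power_add[symmetric])
  also have "\<dots> = ((1::real) gchoose n) * (-1)^n"
    using gbinomial_Vandermonde[of "1/2::real" "1/2" n] by simp
  also have "((1::real) gchoose n) = of_nat (1 choose n)"
    using binomial_gbinomial[of 1 n, where 'a=real] by simp
  also have "(of_nat (1 choose n) :: real) * (-1)^n = (if n = 0 then 1 else if n = 1 then -1 else 0)"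
    by (cases "n = 0"; cases "n = 1") (auto simp: binomial_eq_0)
  finally show ?thesis .
qed

lemma sqrt_coeff_sums: "0 \<le> t \<Longrightarrow> t < 1 \<Longrightarrow> (\<lambda>n. sqrt_coeff n * t^n) sums sqrt (1 - t)"
proof -
  assume t: "0 \<le> t" "t < 1"
  then have "(\<lambda>n. ((1/2) gchoose n) * (-t)^n) sums sqrt (1 + - t)"
    by (intro sqrt_series) simp
  moreover have "((1/2) gchoose n) * (-t)^n = sqrt_coeff n * t^n" for n
    by (simp add: sqrt_coeff_def power_minus[of t n] mult_ac)
  ultimately show ?thesis by simp
qed

text \<open>All but the first coefficient are nonpositive, so the partial sums of \<open>\<bar>sqrt_coeff\<bar>\<close> at
  \<open>t < 1\<close> equal \<open>2 - \<Sum> sqrt_coeff n * t^n \<le> 2 - sqrt (1 - t)\<close>; let \<open>t \<rightarrow> 1\<close>.\<close>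
lemma sqrt_coeff_abs_partial_sum_le: "(\<Sum>n<N. \<bar>sqrt_coeff n\<bar>) \<le> 2"
proof -
  have bound: "(\<Sum>n<N. \<bar>sqrt_coeff n\<bar> * t^n) \<le> 2" if t: "0 \<le> t" "t < 1" for t
  proof (cases N)
    case (Suc M)
    have s: "(\<lambda>n. sqrt_coeff n * t^n) sums sqrt (1 - t)" using sqrt_coeff_sums[OF t] .
    have "(\<Sum>n<N. - (sqrt_coeff n * t^n)) \<le> (\<Sum>n. - (sqrt_coeff n * t^n))"
    proof (rule sum_le_suminf)
      show "summable (\<lambda>n. - (sqrt_coeff n * t ^ n))"
        using s by (intro summable_minus) (auto simp: sums_iff)
      show "0 \<le> - (sqrt_coeff n * t ^ n)" if "n \<in> - {..<N}" for n
        using that Suc sqrt_coeff_nonpos[of n] t by (auto intro!: mult_nonpos_nonneg)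
    qed simp
    also have "\<dots> = - sqrt (1 - t)" using s by (simp add: sums_iff suminf_minus)
    finally have "sqrt (1 - t) \<le> (\<Sum>n<N. sqrt_coeff n * t^n)" by (simp add: sum_negf)
    moreover have "0 \<le> sqrt (1 - t)" using t by simp
    ultimately have "0 \<le> (\<Sum>n<N. sqrt_coeff n * t^n)" by linarith
    moreover have "(\<Sum>n<N. \<bar>sqrt_coeff n\<bar> * t^n) = (\<Sum>n<N. (if n = 0 then 2 else 0) - sqrt_coeff n * t^n)"
      by (rule sum.cong) (auto simp: sqrt_coeff_nonpos abs_of_nonpos)
    ultimately show ?thesis using Suc by (simp add: sum_subtractf)
  qed simp
  define ts where "ts m = 1 - inverse (real (Suc m))" for m
  have "ts \<longlonglongrightarrow> 1 - 0"
    unfolding ts_def by (intro tendsto_diff tendsto_const LIMSEQ_inverse_real_of_nat)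
  then have "(\<lambda>m. \<Sum>n<N. \<bar>sqrt_coeff n\<bar> * ts m ^ n) \<longlonglongrightarrow> (\<Sum>n<N. \<bar>sqrt_coeff n\<bar> * 1 ^ n)"
    by (intro tendsto_intros) simp
  moreover have "(\<Sum>n<N. \<bar>sqrt_coeff n\<bar> * ts m ^ n) \<le> 2" for m
    by (rule bound) (auto simp: ts_def field_simps)
  ultimately show ?thesis
    by (intro LIMSEQ_le_const2[where X="\<lambda>m. \<Sum>n<N. \<bar>sqrt_coeff n\<bar> * ts m ^ n"]) auto
qed

lemma summable_abs_sqrt_coeff: "summable (\<lambda>n. \<bar>sqrt_coeff n\<bar>)"
  by (rule summableI_nonneg_bounded[OF _ sqrt_coeff_abs_partial_sum_le]) simp

lemma suminf_abs_sqrt_coeff_le: "(\<Sum>n. \<bar>sqrt_coeff n\<bar>) \<le> 2"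
  by (rule suminf_le_const[OF summable_abs_sqrt_coeff sqrt_coeff_abs_partial_sum_le])

text \<open>Positivity of \<open>sqrt (1 - B)\<close>: the nonpositive tail \<open>\<Sum>\<^sub>k\<^sub>\<ge>\<^sub>1 sqrt_coeff k * r k\<close> is at least
  \<open>-(\<Sum>\<^sub>k\<^sub>\<ge>\<^sub>1 \<bar>sqrt_coeff k\<bar>) * r 0 \<ge> -r 0\<close>.\<close>
lemma sqrt_coeff_weighted_suminf_nonneg:
  fixes r :: "nat \<Rightarrow> real"
  assumes r: "\<And>k. \<bar>r k\<bar> \<le> r 0"
  shows "summable (\<lambda>k. sqrt_coeff k * r k) \<and> 0 \<le> (\<Sum>k. sqrt_coeff k * r k)"
proof -
  have sa: "summable (\<lambda>k. \<bar>sqrt_coeff k\<bar> * r 0)" by (intro summable_mult2 summable_abs_sqrt_coeff)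
  have s: "summable (\<lambda>k. sqrt_coeff k * r k)"
    by (rule summable_comparison_test'[OF sa]) (auto simp: abs_mult intro!: mult_left_mono r)
  have sa1: "summable (\<lambda>k. \<bar>sqrt_coeff (Suc k)\<bar>)"
    using summable_abs_sqrt_coeff by (subst summable_Suc_iff)
  have tail: "(\<Sum>k. - \<bar>sqrt_coeff (Suc k)\<bar> * r 0) \<le> (\<Sum>k. sqrt_coeff (Suc k) * r (Suc k))"
  proof (rule suminf_le)
    show "- \<bar>sqrt_coeff (Suc k)\<bar> * r 0 \<le> sqrt_coeff (Suc k) * r (Suc k)" for k
      using mult_left_mono[OF r[of "Suc k"] abs_ge_zero[of "sqrt_coeff (Suc k)"]]
        abs_ge_minus_self[of "sqrt_coeff (Suc k) * r (Suc k)"]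
      by (simp add: abs_mult)
    show "summable (\<lambda>k. - \<bar>sqrt_coeff (Suc k)\<bar> * r 0)"
      using sa1 by (simp add: summable_minus summable_mult2)
    show "summable (\<lambda>k. sqrt_coeff (Suc k) * r (Suc k))" using s by (subst summable_Suc_iff)
  qed
  have eq: "(\<Sum>k. - \<bar>sqrt_coeff (Suc k)\<bar> * r 0) = - (((\<Sum>k. \<bar>sqrt_coeff k\<bar>) - 1) * r 0)"
    using suminf_split_head[OF summable_abs_sqrt_coeff] suminf_mult2[OF sa1, of "r 0"]
      suminf_minus[OF summable_mult2[OF sa1, of "r 0"]] by simp
  have le: "((\<Sum>k. \<bar>sqrt_coeff k\<bar>) - 1) * r 0 \<le> r 0"
    using mult_right_mono[of "(\<Sum>k. \<bar>sqrt_coeff k\<bar>) - 1" 1 "r 0"] suminf_abs_sqrt_coeff_le r[of 0]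
    by simp
  have "0 \<le> (\<Sum>k. sqrt_coeff (Suc k) * r (Suc k)) + r 0" using tail eq le by linarith
  with s show ?thesis using suminf_split_head[OF s] by simp
qed

section \<open>Square roots of bounded positive operators\<close>

lemma bounded_linear_scaleC: "bounded_linear (\<lambda>v::'a::complex_inner. scaleC a v)"
  by (rule bounded_linear_intro[of _ "cmod a"])
    (simp_all add: scaleC_add_right scaleC_scaleR_commute norm_scaleC mult.commute)

definition sqrt_one_minus :: "('a::complex_inner \<Rightarrow> 'a) \<Rightarrow> 'a \<Rightarrow> 'a" where
  "sqrt_one_minus B x = (\<Sum>k. sqrt_coeff k *\<^sub>R (B ^^ k) x)"

definition sqrt_one_minus_partial :: "('a::complex_inner \<Rightarrow> 'a) \<Rightarrow> nat \<Rightarrow> 'a \<Rightarrow> 'a" where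
  "sqrt_one_minus_partial B N x = (\<Sum>k<N. sqrt_coeff k *\<^sub>R (B ^^ k) x)"

definition sqrt_product_term :: "('a::complex_inner \<Rightarrow> 'a) \<Rightarrow> 'a \<Rightarrow> nat \<times> nat \<Rightarrow> 'a" where
  "sqrt_product_term B x = (\<lambda>(i,j). (sqrt_coeff i * sqrt_coeff j) *\<^sub>R (B ^^ (i+j)) x)"

definition sqrt_product_weight :: "nat \<times> nat \<Rightarrow> real" where
  "sqrt_product_weight = (\<lambda>(i,j). \<bar>sqrt_coeff i\<bar> * \<bar>sqrt_coeff j\<bar>)"

abbreviation index_square :: "nat \<Rightarrow> (nat \<times> nat) set" where
  "index_square N \<equiv> {..<N} \<times> {..<N}"

abbreviation index_triangle :: "nat \<Rightarrow> (nat \<times> nat) set" where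
  "index_triangle N \<equiv> {(i,j). i + j < N}"

lemma index_triangle_subset_square: "index_triangle N \<subseteq> index_square N"
  by auto

lemma sqrt_product_weight_square_minus_triangle:
  "(\<lambda>N. sum sqrt_product_weight (index_square N) - sum sqrt_product_weight (index_triangle N)) \<longlonglongrightarrow> 0"
proof -
  let ?s = "\<Sum>k. \<bar>sqrt_coeff k\<bar>"
  have "sum sqrt_product_weight (index_square N) = (\<Sum>i<N. \<bar>sqrt_coeff i\<bar>) * (\<Sum>j<N. \<bar>sqrt_coeff j\<bar>)" for N
    by (simp add: sqrt_product_weight_def sum_product sum.cartesian_product)
  moreover have "(\<lambda>N. (\<Sum>i<N. \<bar>sqrt_coeff i\<bar>) * (\<Sum>j<N. \<bar>sqrt_coeff j\<bar>)) \<longlonglongrightarrow> ?s * ?s"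
    by (intro tendsto_mult summable_LIMSEQ summable_abs_sqrt_coeff)
  ultimately have square: "(\<lambda>N. sum sqrt_product_weight (index_square N)) \<longlonglongrightarrow> ?s * ?s" by simp
  have "sum sqrt_product_weight (index_triangle N)
      = (\<Sum>n<N. \<Sum>i\<le>n. \<bar>sqrt_coeff i\<bar> * \<bar>sqrt_coeff (n - i)\<bar>)" for N
    unfolding sqrt_product_weight_def by (rule sum.triangle_reindex)
  moreover have "(\<lambda>n. \<Sum>i\<le>n. \<bar>sqrt_coeff i\<bar> * \<bar>sqrt_coeff (n - i)\<bar>) sums (?s * ?s)"
    by (rule Cauchy_product_sums) (simp_all add: summable_abs_sqrt_coeff)
  ultimately have triangle: "(\<lambda>N. sum sqrt_product_weight (index_triangle N)) \<longlonglongrightarrow> ?s * ?s"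
    by (simp add: sums_def)
  show ?thesis using tendsto_diff[OF square triangle] by simp
qed

locale hermitian_contraction =
  fixes B :: "'a::chilbert \<Rightarrow> 'a"
  assumes lin: "clinear B" and sym: "hermitian B" and contr: "\<And>x. norm (B x) \<le> norm x"
begin

lemma norm_funpow_le: "norm ((B ^^ k) x) \<le> norm x"
  by (induction k) (auto intro: order_trans[OF contr])

lemma norm_sqrt_term_le: "norm (sqrt_coeff k *\<^sub>R (B ^^ k) x) \<le> \<bar>sqrt_coeff k\<bar> * norm x"
  using norm_funpow_le[of k x] by (simp add: mult_left_mono)

lemma summable_norm_sqrt_terms: "summable (\<lambda>k. norm (sqrt_coeff k *\<^sub>R (B ^^ k) x))"
  by (rule summable_comparison_test'[OF summable_mult2[OF summable_abs_sqrt_coeff, of "norm x"]])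
    (unfold real_norm_def abs_norm_cancel, rule norm_sqrt_term_le)

lemma summable_sqrt_terms: "summable (\<lambda>k. sqrt_coeff k *\<^sub>R (B ^^ k) x)"
  by (rule summable_norm_cancel[OF summable_norm_sqrt_terms])

lemma norm_sqrt_one_minus_le: "norm (sqrt_one_minus B x) \<le> 2 * norm x"
proof -
  have "norm (sqrt_one_minus B x) \<le> (\<Sum>k. norm (sqrt_coeff k *\<^sub>R (B ^^ k) x))"
    unfolding sqrt_one_minus_def by (rule summable_norm[OF summable_norm_sqrt_terms])
  also have "\<dots> \<le> (\<Sum>k. \<bar>sqrt_coeff k\<bar> * norm x)"
    by (rule suminf_le[OF norm_sqrt_term_le summable_norm_sqrt_terms summable_mult2[OF summable_abs_sqrt_coeff]])
  also have "\<dots> = (\<Sum>k. \<bar>sqrt_coeff k\<bar>) * norm x"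
    by (rule suminf_mult2[OF summable_abs_sqrt_coeff, symmetric])
  also have "\<dots> \<le> 2 * norm x" by (rule mult_right_mono[OF suminf_abs_sqrt_coeff_le]) simp
  finally show ?thesis .
qed

lemma bounded_linear_suminf_sqrt_terms:
  "bounded_linear L \<Longrightarrow> L (sqrt_one_minus B x) = (\<Sum>k. L (sqrt_coeff k *\<^sub>R (B ^^ k) x))"
  unfolding sqrt_one_minus_def by (rule bounded_linear.suminf[OF _ summable_sqrt_terms])

lemma clinear_sqrt_one_minus: "clinear (sqrt_one_minus B)"
proof -
  have pow: "clinear (B ^^ k)" for k by (rule clinear_funpow[OF lin])
  have "sqrt_one_minus B (x + y) = sqrt_one_minus B x + sqrt_one_minus B y" for x y
    unfolding sqrt_one_minus_def clinear_add[OF pow] scaleR_add_right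
    by (rule suminf_add[OF summable_sqrt_terms summable_sqrt_terms, symmetric])
  moreover have "sqrt_one_minus B (scaleC a x) = scaleC a (sqrt_one_minus B x)" for a x
    using bounded_linear_suminf_sqrt_terms[OF bounded_linear_scaleC, of a x]
    by (simp add: sqrt_one_minus_def clinear_scaleC[OF pow] scaleC_scaleR_commute)
  ultimately show ?thesis by (simp add: clinear_def)
qed

lemma hermitian_sqrt_one_minus: "hermitian (sqrt_one_minus B)"
proof -
  have "cinner (sqrt_one_minus B x) y = cinner x (sqrt_one_minus B y)" for x y
    using bounded_linear_suminf_sqrt_terms[OF bounded_linear_cinner_left[of y], of x]
      bounded_linear_suminf_sqrt_terms[OF bounded_linear_cinner_right[of x], of y]
      hermitian_funpow[OF sym]
    by (simp add: cinner_scaleR_left cinner_scaleR_right hermitian_def)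
  then show ?thesis by (simp add: hermitian_def)
qed

lemma positive_map_sqrt_one_minus: "positive_map (sqrt_one_minus B)"
proof -
  have "0 \<le> Re (cinner x (sqrt_one_minus B x))" for x
  proof -
    define r where "r k = Re (cinner x ((B ^^ k) x))" for k
    have "Re (cinner x (sqrt_one_minus B x)) = (\<Sum>k. sqrt_coeff k * r k)"
      using bounded_linear_suminf_sqrt_terms[OF
          bounded_linear_compose[OF bounded_linear_Re bounded_linear_cinner_right], of x x]
      by (simp add: r_def cinner_scaleR_right)
    moreover have "\<bar>r k\<bar> \<le> r 0" for k
    proof -
      have "\<bar>r k\<bar> \<le> norm x * norm ((B ^^ k) x)"
        unfolding r_def using abs_Re_le_cmod cinner_Cauchy_Schwarz by (rule order_trans)
      also have "\<dots> \<le> norm x * norm x" by (rule mult_left_mono[OF norm_funpow_le]) simp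
      finally show ?thesis by (simp add: r_def Re_cinner_self power2_eq_square)
    qed
    ultimately show ?thesis using sqrt_coeff_weighted_suminf_nonneg[of r] by simp
  qed
  then show ?thesis by (simp add: positive_map_def)
qed

lemma sqrt_one_minus_commute:
  assumes "clinear C" "bounded_map C" "\<And>x. C (B x) = B (C x)"
  shows "C (sqrt_one_minus B x) = sqrt_one_minus B (C x)"
proof -
  have "C ((B ^^ k) y) = (B ^^ k) (C y)" for k y
    by (induction k) (simp_all add: assms(3))
  then show ?thesis
    using bounded_linear_suminf_sqrt_terms[OF clinear_bounded_map_imp_bounded_linear[OF assms(1,2)]]
    by (simp add: sqrt_one_minus_def clinear_scaleR[OF assms(1)])
qed

lemma bounded_positive_sqrt_one_minus: "bounded_positive (sqrt_one_minus B)"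
  using clinear_sqrt_one_minus norm_sqrt_one_minus_le hermitian_sqrt_one_minus positive_map_sqrt_one_minus
  by (auto simp: bounded_positive_def bounded_map_def)

lemma sqrt_one_minus_partial_tendsto:
  "(\<lambda>N. sqrt_one_minus_partial B N x) \<longlonglongrightarrow> sqrt_one_minus B x"
  unfolding sqrt_one_minus_partial_def sqrt_one_minus_def by (rule summable_LIMSEQ[OF summable_sqrt_terms])

lemma norm_sqrt_one_minus_partial_le: "norm (sqrt_one_minus_partial B N y) \<le> 2 * norm y"
proof -
  have "norm (sqrt_one_minus_partial B N y) \<le> (\<Sum>k<N. norm (sqrt_coeff k *\<^sub>R (B ^^ k) y))"
    unfolding sqrt_one_minus_partial_def by (rule norm_sum)
  also have "\<dots> \<le> (\<Sum>k<N. \<bar>sqrt_coeff k\<bar>) * norm y"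
    unfolding sum_distrib_right by (rule sum_mono[OF norm_sqrt_term_le])
  also have "\<dots> \<le> 2 * norm y" by (rule mult_right_mono[OF sqrt_coeff_abs_partial_sum_le]) simp
  finally show ?thesis .
qed

lemma sqrt_one_minus_partial_square_tendsto:
  "(\<lambda>N. sqrt_one_minus_partial B N (sqrt_one_minus_partial B N x))
     \<longlonglongrightarrow> sqrt_one_minus B (sqrt_one_minus B x)"
proof -
  define v where "v = sqrt_one_minus B x"
  have diff: "sqrt_one_minus_partial B N (a - b) = sqrt_one_minus_partial B N a - sqrt_one_minus_partial B N b"
    for N a b
    unfolding sqrt_one_minus_partial_def
    by (simp add: clinear_diff[OF clinear_funpow[OF lin]] scaleR_diff_right sum_subtractf)
  have "(\<lambda>N. sqrt_one_minus_partial B N x - v) \<longlonglongrightarrow> 0"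
    unfolding v_def by (rule LIM_zero[OF sqrt_one_minus_partial_tendsto])
  then have "(\<lambda>N. sqrt_one_minus_partial B N (sqrt_one_minus_partial B N x - v)) \<longlonglongrightarrow> 0"
    by (rule tendsto_0_le[where K=2])
      (intro always_eventually allI, rule order_trans[OF norm_sqrt_one_minus_partial_le], simp)
  from tendsto_add[OF this sqrt_one_minus_partial_tendsto[of v]]
  show ?thesis by (simp add: diff v_def)
qed

lemma sqrt_one_minus_partial_square:
  "sqrt_one_minus_partial B N (sqrt_one_minus_partial B N x) = sum (sqrt_product_term B x) (index_square N)"
proof -
  have pow: "clinear (B ^^ k)" for k by (rule clinear_funpow[OF lin])
  have "sqrt_one_minus_partial B N (sqrt_one_minus_partial B N x)
      = (\<Sum>i<N. \<Sum>j<N. sqrt_product_term B x (i,j))"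
    unfolding sqrt_one_minus_partial_def
    by (simp add: clinear_sum[OF pow] clinear_scaleR[OF pow] sqrt_product_term_def scaleR_sum_right funpow_add)
  then show ?thesis by (simp add: sum.cartesian_product)
qed

lemma sum_sqrt_product_term_triangle:
  assumes "N \<ge> 2" shows "sum (sqrt_product_term B x) (index_triangle N) = x - B x"
proof -
  have "sum (sqrt_product_term B x) (index_triangle N)
      = (\<Sum>n<N. \<Sum>i\<le>n. (sqrt_coeff i * sqrt_coeff (n - i)) *\<^sub>R (B ^^ (i + (n - i))) x)"
    unfolding sqrt_product_term_def by (rule sum.triangle_reindex)
  also have "\<dots> = (\<Sum>n<N. (\<Sum>i\<le>n. sqrt_coeff i * sqrt_coeff (n - i)) *\<^sub>R (B ^^ n) x)"
    by (simp add: scaleR_sum_left)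
  also have "\<dots> = (\<Sum>n<2. (\<Sum>i\<le>n. sqrt_coeff i * sqrt_coeff (n - i)) *\<^sub>R (B ^^ n) x)"
    using assms by (intro sum.mono_neutral_right) (auto simp: sqrt_coeff_Cauchy_product)
  also have "\<dots> = x - B x"
    by (simp add: sqrt_coeff_Cauchy_product numeral_2_eq_2 lessThan_Suc)
  finally show ?thesis .
qed

lemma norm_sum_sqrt_product_term_square_minus_triangle:
  "norm (sum (sqrt_product_term B x) (index_square N) - sum (sqrt_product_term B x) (index_triangle N))
     \<le> (sum sqrt_product_weight (index_square N) - sum sqrt_product_weight (index_triangle N)) * norm x"
proof -
  have "norm (sum (sqrt_product_term B x) (index_square N) - sum (sqrt_product_term B x) (index_triangle N))
      = norm (\<Sum>p\<in>index_square N - index_triangle N. sqrt_product_term B x p)"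
    by (subst sum_diff) (simp_all add: index_triangle_subset_square)
  also have "\<dots> \<le> (\<Sum>p\<in>index_square N - index_triangle N. sqrt_product_weight p * norm x)"
  proof (rule order_trans[OF norm_sum sum_mono])
    fix p :: "nat \<times> nat"
    obtain i j where p: "p = (i,j)" by force
    have "\<bar>sqrt_coeff i\<bar> * \<bar>sqrt_coeff j\<bar> * norm ((B ^^ (i+j)) x) \<le> \<bar>sqrt_coeff i\<bar> * \<bar>sqrt_coeff j\<bar> * norm x"
      by (rule mult_left_mono[OF norm_funpow_le]) simp
    then show "norm (sqrt_product_term B x p) \<le> sqrt_product_weight p * norm x"
      by (simp add: p sqrt_product_term_def sqrt_product_weight_def abs_mult)
  qed
  also have "\<dots> = (sum sqrt_product_weight (index_square N) - sum sqrt_product_weight (index_triangle N)) * norm x"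
    by (simp add: sum_distrib_right[symmetric] sum_diff index_triangle_subset_square)
  finally show ?thesis .
qed

text \<open>Both double sums run over the same coefficients; they differ only on
  \<open>index_square N - index_triangle N\<close>, whose total weight tends to \<open>0\<close>.\<close>
lemma sqrt_one_minus_square: "sqrt_one_minus B (sqrt_one_minus B x) = x - B x"
proof -
  define d where "d N = sum (sqrt_product_term B x) (index_square N) - sum (sqrt_product_term B x) (index_triangle N)" for N
  have "d \<longlonglongrightarrow> 0"
  proof (rule tendsto_0_le[OF sqrt_product_weight_square_minus_triangle, where K="norm x"])
    show "\<forall>\<^sub>F N in sequentially. norm (d N)
        \<le> norm (sum sqrt_product_weight (index_square N) - sum sqrt_product_weight (index_triangle N)) * norm x"
      unfolding d_def
      by (intro always_eventually allI order_trans[OF norm_sum_sqrt_product_term_square_minus_triangle]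
          mult_right_mono) simp_all
  qed
  then have "(\<lambda>N. (x - B x) + d N) \<longlonglongrightarrow> (x - B x) + 0" by (rule tendsto_add[OF tendsto_const])
  moreover have "\<forall>\<^sub>F N in sequentially. (x - B x) + d N = sqrt_one_minus_partial B N (sqrt_one_minus_partial B N x)"
    unfolding eventually_sequentially
    by (rule exI[of _ 2]) (simp add: d_def sqrt_one_minus_partial_square sum_sqrt_product_term_triangle)
  ultimately have "(\<lambda>N. sqrt_one_minus_partial B N (sqrt_one_minus_partial B N x)) \<longlonglongrightarrow> x - B x"
    by (simp add: Lim_transform_eventually)
  then show ?thesis using LIMSEQ_unique[OF sqrt_one_minus_partial_square_tendsto] by blast
qed

end

definition in_bicommutant :: "('a::complex_inner \<Rightarrow> 'a) \<Rightarrow> ('a \<Rightarrow> 'a) \<Rightarrow> bool" where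
  "in_bicommutant A R \<longleftrightarrow>
     (\<forall>C. clinear C \<and> bounded_map C \<and> (\<forall>x. C (A x) = A (C x)) \<longrightarrow> (\<forall>x. C (R x) = R (C x)))"

lemma hermitian_contraction_one_minus_scaled:
  fixes A :: "'a::chilbert \<Rightarrow> 'a"
  assumes A: "bounded_positive A" and "c > 0" and c: "\<And>x. norm (A x) \<le> c * norm x"
  shows "hermitian_contraction (\<lambda>x. x - (1/c) *\<^sub>R A x)"
proof
  define B where "B x = x - (1/c) *\<^sub>R A x" for x
  have lA: "clinear A" and sA: "hermitian A" and pA: "positive_map A"
    using A by (auto simp: bounded_positive_def)
  show lB: "clinear (\<lambda>x. x - (1/c) *\<^sub>R A x)"
    unfolding clinear_def
    by (simp add: clinear_add[OF lA] clinear_scaleC[OF lA] scaleC_diff_right scaleC_scaleR_commute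
        scaleR_add_right)
  show sB: "hermitian (\<lambda>x. x - (1/c) *\<^sub>R A x)"
    using sA by (simp add: hermitian_def cinner_diff_left cinner_diff_right cinner_scaleR_left cinner_scaleR_right)
  have reB: "Re (cinner x (B x)) = (norm x)\<^sup>2 - (1/c) * Re (cinner x (A x))" for x
    by (simp add: B_def cinner_diff_right cinner_scaleR_right Re_cinner_self)
  have "Re (cinner x (A x)) \<le> c * (norm x)\<^sup>2" for x
    using complex_Re_le_cmod cinner_Cauchy_Schwarz[of x "A x"] mult_left_mono[OF c[of x] norm_ge_zero[of x]]
    by (simp add: power2_eq_square mult_ac) (meson order_trans)
  then have pB: "positive_map B"
    using \<open>c > 0\<close> by (simp add: positive_map_def reB field_simps)
  have leB: "Re (cinner x (B x)) \<le> (norm x)\<^sup>2" for x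
    unfolding reB using pA \<open>c > 0\<close> by (simp add: positive_map_def)
  show "norm (x - (1/c) *\<^sub>R A x) \<le> norm x" for x
  proof -
    have "(Re (cinner (B x) (B x)))\<^sup>2 \<le> Re (cinner (B x) (B (B x))) * Re (cinner x (B x))"
      using positive_form_Cauchy_Schwarz[of B] lB sB pB by (simp add: B_def [abs_def])
    also have "\<dots> \<le> (norm (B x))\<^sup>2 * (norm x)\<^sup>2"
      by (rule mult_mono[OF leB leB]) (use pB in \<open>auto simp: positive_map_def\<close>)
    finally have "(norm (B x))\<^sup>2 * (norm (B x))\<^sup>2 \<le> (norm (B x))\<^sup>2 * (norm x)\<^sup>2"
      by (simp add: Re_cinner_self power2_eq_square)
    then have "(norm (B x))\<^sup>2 \<le> (norm x)\<^sup>2 \<or> norm (B x) = 0"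
      by (metis mult_le_cancel_left_pos zero_less_power2 norm_eq_zero)
    then show ?thesis by (auto simp: B_def power2_le_iff_abs_le)
  qed
qed

lemma bounded_positive_scaleR:
  assumes "bounded_positive L" "0 \<le> r"
  shows "bounded_positive (\<lambda>x. r *\<^sub>R L x)"
proof -
  have L: "clinear L" "bounded_map L" "hermitian L" "positive_map L"
    using assms(1) by (simp_all add: bounded_positive_def)
  obtain C where "\<And>x. norm (L x) \<le> C * norm x" using L(2) by (auto simp: bounded_map_def)
  then have "norm (r *\<^sub>R L x) \<le> (r * C) * norm x" for x
    using \<open>0 \<le> r\<close> by (simp add: mult.assoc mult_left_mono)
  then show ?thesis
    using L \<open>0 \<le> r\<close>
    by (auto simp: bounded_positive_def bounded_map_def clinear_def hermitian_def positive_map_def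
        scaleC_scaleR_commute scaleR_add_right cinner_scaleR_left cinner_scaleR_right)
qed

text \<open>With \<open>A \<le> c\<close>, the operator \<open>B = 1 - A/c\<close> is a positive contraction and
  \<open>sqrt A = sqrt c * sqrt (1 - B)\<close>.\<close>
lemma bounded_positive_sqrt_exists:
  fixes A :: "'a::chilbert \<Rightarrow> 'a"
  assumes A: "bounded_positive A"
  shows "\<exists>R. bounded_positive R \<and> (\<forall>x. R (R x) = A x) \<and> in_bicommutant A R"
proof -
  obtain c where "c > 0" and c: "\<And>x. norm (A x) \<le> c * norm x"
    using bounded_map_pos_bound[of A] A by (auto simp: bounded_positive_def)
  define B where "B x = x - (1/c) *\<^sub>R A x" for x
  interpret hermitian_contraction B
    unfolding B_def [abs_def] by (rule hermitian_contraction_one_minus_scaled[OF A \<open>c > 0\<close> c])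
  define R where "R x = sqrt c *\<^sub>R sqrt_one_minus B x" for x
  have "bounded_positive R"
    unfolding R_def using \<open>c > 0\<close> by (intro bounded_positive_scaleR[OF bounded_positive_sqrt_one_minus]) simp
  moreover have "R (R x) = A x" for x
    using \<open>c > 0\<close> by (simp add: R_def clinear_scaleR[OF clinear_sqrt_one_minus] sqrt_one_minus_square B_def)
  moreover have "C (R x) = R (C x)" if C: "clinear C" "bounded_map C" "\<And>x. C (A x) = A (C x)" for C x
  proof -
    have "C (B y) = B (C y)" for y
      unfolding B_def by (simp add: clinear_diff[OF C(1)] clinear_scaleR[OF C(1)] C(3))
    then show ?thesis
      unfolding R_def by (simp add: clinear_scaleR[OF C(1)] sqrt_one_minus_commute[OF C(1,2)])
  qed
  then have "in_bicommutant A R" by (auto simp: in_bicommutant_def)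
  ultimately show ?thesis by blast
qed

definition pos_sqrt :: "('a::chilbert \<Rightarrow> 'a) \<Rightarrow> 'a \<Rightarrow> 'a" where
  "pos_sqrt A = (SOME R. bounded_positive R \<and> (\<forall>x. R (R x) = A x) \<and> in_bicommutant A R)"

lemma
  fixes A :: "'a::chilbert \<Rightarrow> 'a"
  assumes "bounded_positive A"
  shows bounded_positive_pos_sqrt: "bounded_positive (pos_sqrt A)"
    and pos_sqrt_square: "pos_sqrt A (pos_sqrt A x) = A x"
    and in_bicommutant_pos_sqrt: "in_bicommutant A (pos_sqrt A)"
  using someI_ex[OF bounded_positive_sqrt_exists[OF assms]] unfolding pos_sqrt_def [symmetric] by auto

lemma pos_sqrt_commute:
  assumes "bounded_positive A" "clinear C" "bounded_map C" "\<And>x. C (A x) = A (C x)"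
  shows "C (pos_sqrt A x) = pos_sqrt A (C x)"
  using in_bicommutant_pos_sqrt[OF assms(1)] assms(2-4) unfolding in_bicommutant_def by blast

text \<open>A second positive root \<open>R\<^sub>1\<close> commutes with \<open>A = R\<^sub>1\<^sup>2\<close>, hence with \<open>R = pos_sqrt A\<close>;
  for \<open>y = R\<^sub>1 x - R x\<close> this gives \<open>R\<^sub>1 y + R y = 0\<close>, so both positive forms vanish at \<open>y\<close>.\<close>
lemma pos_sqrt_unique:
  fixes A :: "'a::chilbert \<Rightarrow> 'a"
  assumes A: "bounded_positive A" and R1: "bounded_positive R1" and sq1: "\<And>x. R1 (R1 x) = A x"
  shows "R1 = pos_sqrt A"
proof
  fix x
  let ?R = "pos_sqrt A"
  have l1: "clinear R1" "bounded_map R1" "hermitian R1" "positive_map R1"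
    using R1 by (auto simp: bounded_positive_def)
  have l: "clinear ?R" "bounded_map ?R" "hermitian ?R" "positive_map ?R"
    using bounded_positive_pos_sqrt[OF A] by (auto simp: bounded_positive_def)
  have com: "R1 (?R z) = ?R (R1 z)" for z
    by (rule pos_sqrt_commute[OF A l1(1,2)]) (metis sq1)
  define y where "y = R1 x - ?R x"
  have "R1 y + ?R y = 0"
    unfolding y_def by (simp add: clinear_diff[OF l1(1)] clinear_diff[OF l(1)] sq1 pos_sqrt_square[OF A] com)
  then have "Re (cinner y (R1 y)) + Re (cinner y (?R y)) = 0"
    by (metis cinner_add_right cinner_zero_right plus_complex.sel(1) zero_complex.sel(1))
  moreover have "0 \<le> Re (cinner y (R1 y))" "0 \<le> Re (cinner y (?R y))"
    using l1(4) l(4) by (auto simp: positive_map_def)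
  ultimately have "R1 y = 0" "?R y = 0"
    using positive_map_form_zero[OF l1(1,3,4)] positive_map_form_zero[OF l(1,3,4)] by auto
  have "cinner y y = cinner y (R1 x) - cinner y (?R x)"
    by (simp add: y_def cinner_diff_right)
  also have "\<dots> = cinner (R1 y) x - cinner (?R y) x"
    using l1(3) l(3) by (simp add: hermitian_def)
  finally have "cinner y y = 0" using \<open>R1 y = 0\<close> \<open>?R y = 0\<close> by simp
  then show "R1 x = ?R x" by (simp add: y_def cinner_self_eq_zero_iff)
qed

lemma pos_sqrt_inj_dense:
  fixes A :: "'a::chilbert \<Rightarrow> 'a"
  assumes A: "bounded_positive A" and "inj A" and "closure (range A) = UNIV"
  shows "inj (pos_sqrt A)" "closure (range (pos_sqrt A)) = UNIV" "range A \<subseteq> range (pos_sqrt A)"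
proof -
  have sq: "\<And>x. pos_sqrt A (pos_sqrt A x) = A x" using pos_sqrt_square[OF A] .
  show "inj (pos_sqrt A)"
    using \<open>inj A\<close> by (metis injI sq inj_eq)
  show sub: "range A \<subseteq> range (pos_sqrt A)" using sq by (metis image_subset_iff rangeI)
  show "closure (range (pos_sqrt A)) = UNIV"
    using closure_mono[OF sub] \<open>closure (range A) = UNIV\<close> by auto
qed

section \<open>Operators given as inverses of injective bounded maps\<close>

declare domIff [simp del]

lemma continuous_on_eq_dense:
  fixes f g :: "'a::topological_space \<Rightarrow> 'b::t2_space"
  assumes "continuous_on UNIV f" "continuous_on UNIV g" "closure D = UNIV" "\<And>x. x \<in> D \<Longrightarrow> f x = g x"
  shows "f x = g x"
proof -
  have "closure D \<subseteq> {x. f x = g x}"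
    by (rule closure_minimal) (use assms closed_Collect_eq[OF assms(1,2)] in auto)
  then show ?thesis using assms(3) by auto
qed

lemma orthogonal_to_dense_eq_zero:
  fixes v :: "'a::complex_inner"
  assumes "closure D = UNIV" "\<And>f. f \<in> D \<Longrightarrow> cinner f v = 0"
  shows "v = 0"
proof -
  have "cinner v v = 0"
    using continuous_on_eq_dense[OF linear_continuous_on[OF bounded_linear_cinner_left]
        continuous_on_const assms(1)] assms(2) by blast
  then show ?thesis by (simp add: cinner_self_eq_zero_iff)
qed

definition inverse_op :: "('a \<Rightarrow> 'a) \<Rightarrow> 'a \<Rightarrow> 'a option" where
  "inverse_op K = (\<lambda>y. if y \<in> range K then Some (inv K y) else None)"

lemma dom_inverse_op: "dom (inverse_op K) = range K"
  by (auto simp: inverse_op_def dom_def)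

lemma inverse_op_apply: "inj K \<Longrightarrow> inverse_op K (K x) = Some x"
  by (simp add: inverse_op_def)

lemma the_inverse_op_apply: "inj K \<Longrightarrow> the (inverse_op K (K x)) = x"
  by (simp add: inverse_op_def)

lemma inverse_op_square: "inj R \<Longrightarrow> inverse_op R \<circ>\<^sub>m inverse_op R = inverse_op (\<lambda>x. R (R x))"
proof
  fix y assume i: "inj R"
  have iRR: "inj (\<lambda>x. R (R x))" using i by (simp add: inj_def)
  show "(inverse_op R \<circ>\<^sub>m inverse_op R) y = inverse_op (\<lambda>x. R (R x)) y"
  proof (cases "y \<in> range (\<lambda>x. R (R x))")
    case True
    then obtain x where y: "y = R (R x)" by auto
    show ?thesis using i inverse_op_apply[OF iRR, of x] by (simp add: y inverse_op_apply map_comp_def)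
  next
    case False
    then have n: "inverse_op (\<lambda>x. R (R x)) y = None" by (simp add: inverse_op_def)
    show ?thesis
    proof (cases "y \<in> range R")
      case True
      then obtain z where z: "y = R z" by auto
      have "z \<notin> range R" using False z by auto
      then show ?thesis using n i by (simp add: z inverse_op_apply map_comp_def) (simp add: inverse_op_def)
    next
      case False
      then show ?thesis using n by (simp add: map_comp_def inverse_op_def)
    qed
  qed
qed

lemma lin_op_inverse_op:
  assumes l: "clinear K" and i: "inj K"
  shows "lin_op (inverse_op K)"
proof -
  have "0 \<in> range K" using clinear_zero[OF l] by (metis rangeI)
  moreover have "x + y \<in> dom (inverse_op K) \<and> the (inverse_op K (x + y)) = the (inverse_op K x) + the (inverse_op K y)"
    if xy: "x \<in> dom (inverse_op K)" "y \<in> dom (inverse_op K)" for x y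
  proof -
    obtain a b where "x = K a" "y = K b" using xy unfolding dom_inverse_op by blast
    then show ?thesis using i clinear_add[OF l, of a b, symmetric]
      by (simp add: dom_inverse_op the_inverse_op_apply)
  qed
  moreover have "scaleC a x \<in> dom (inverse_op K) \<and> the (inverse_op K (scaleC a x)) = scaleC a (the (inverse_op K x))"
    if xd: "x \<in> dom (inverse_op K)" for a x
  proof -
    obtain b where "x = K b" using xd unfolding dom_inverse_op by blast
    then show ?thesis using i clinear_scaleC[OF l, of a b, symmetric]
      by (simp add: dom_inverse_op the_inverse_op_apply)
  qed
  ultimately show ?thesis by (simp add: lin_op_def dom_inverse_op)
qed

lemma adjoint_equation_inverse_op_iff:
  fixes K :: "'a::complex_inner \<Rightarrow> 'a"
  assumes s: "hermitian K" and i: "inj K"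
  shows "(\<forall>f\<in>dom (inverse_op K). cinner (the (inverse_op K f)) g = cinner f h) \<longleftrightarrow> g = K h"
proof
  assume P: "\<forall>f\<in>dom (inverse_op K). cinner (the (inverse_op K f)) g = cinner f h"
  have "cinner u g = cinner u (K h)" for u
    using P[rule_format, of "K u"] s i by (simp add: dom_inverse_op the_inverse_op_apply hermitian_def)
  then have "cinner (g - K h) (g - K h) = 0"
    by (simp add: cinner_diff_left cinner_diff_right)
  then show "g = K h" by (simp add: cinner_self_eq_zero_iff)
next
  assume "g = K h"
  then show "\<forall>f\<in>dom (inverse_op K). cinner (the (inverse_op K f)) g = cinner f h"
    using s i by (auto simp: dom_inverse_op the_inverse_op_apply hermitian_def)
qed

lemma adjoint_inverse_op:
  fixes K :: "'a::complex_inner \<Rightarrow> 'a"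
  assumes s: "hermitian K" and i: "inj K"
  shows "adjoint_op (inverse_op K) = inverse_op K"
proof
  fix g
  note equation = adjoint_equation_inverse_op_iff[OF s i, of g]
  show "adjoint_op (inverse_op K) g = inverse_op K g"
  proof (cases "g \<in> range K")
    case True
    then obtain h where g: "g = K h" by auto
    have "(THE h. \<forall>f\<in>dom (inverse_op K). cinner (the (inverse_op K f)) g = cinner f h) = h"
      unfolding equation using g i by (auto simp: inj_eq)
    then show ?thesis using i g equation by (auto simp: adjoint_op_def inverse_op_apply simp del: dom_def)
  next
    case False
    then have "\<not> (\<exists>h. \<forall>f\<in>dom (inverse_op K). cinner (the (inverse_op K f)) g = cinner f h)"
      unfolding equation by blast
    with False show ?thesis by (simp add: adjoint_op_def inverse_op_def del: dom_def)
  qed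
qed

lemma self_adjoint_inverse_op:
  fixes K :: "'a::complex_inner \<Rightarrow> 'a"
  assumes "clinear K" "hermitian K" "inj K" "closure (range K) = UNIV"
  shows "self_adjoint_op (inverse_op K)"
  using assms by (simp add: self_adjoint_op_def lin_op_inverse_op adjoint_inverse_op dom_inverse_op)

lemma positive_op_inverse_op:
  fixes K :: "'a::complex_inner \<Rightarrow> 'a"
  assumes "hermitian K" "positive_map K" "inj K"
  shows "positive_op (inverse_op K)"
proof -
  have "\<exists>r\<ge>0. cinner f (the (inverse_op K f)) = complex_of_real r" if fd: "f \<in> dom (inverse_op K)" for f
  proof -
    obtain u where f: "f = K u" using fd unfolding dom_inverse_op by blast
    have "cinner f (the (inverse_op K f)) = cinner (K u) u" using assms(3) by (simp add: f the_inverse_op_apply)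
    also have "\<dots> = cinner u (K u)" using assms(1) by (simp add: hermitian_def)
    also have "\<dots> = of_real (Re (cinner u (K u)))" by (rule hermitian_cinner_real[OF assms(1)])
    finally show ?thesis using assms(2) by (auto simp: positive_map_def)
  qed
  then show ?thesis by (simp add: positive_op_def)
qed

lemma self_adjoint_op_symmetric:
  fixes S :: "'a::complex_inner op"
  assumes sa: "self_adjoint_op S" and f: "f \<in> dom S" and g: "g \<in> dom S"
  shows "cinner (the (S f)) g = cinner f (the (S g))"
proof -
  let ?P = "\<lambda>h. \<forall>f\<in>dom S. cinner (the (S f)) g = cinner f h"
  have adj: "adjoint_op S = S" and dense: "closure (dom S) = UNIV" using sa by (auto simp: self_adjoint_op_def)
  have ex: "\<exists>h. ?P h"
  proof (rule ccontr)
    assume "\<not> (\<exists>h. ?P h)"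
    then have "adjoint_op S g = None" by (simp add: adjoint_op_def del: dom_def)
    then show False using adj g by auto
  qed
  have uniq: "h1 = h2" if "?P h1" "?P h2" for h1 h2
  proof -
    have "h1 - h2 = 0"
      by (rule orthogonal_to_dense_eq_zero[OF dense]) (use that in \<open>auto simp: cinner_diff_right\<close>)
    then show ?thesis by simp
  qed
  obtain h0 where h0: "?P h0" using ex by blast
  have "?P (THE h. ?P h)" by (rule theI[of _ h0]) (use h0 uniq in blast)+
  moreover have "S g = Some (THE h. ?P h)"
  proof -
    have "S g = adjoint_op S g" using adj by simp
    also have "\<dots> = Some (THE h. ?P h)" using ex unfolding adjoint_op_def by (simp only: if_True)
    finally show ?thesis .
  qed
  ultimately show ?thesis using f by auto
qed

lemma inverse_op_inv_into:
  fixes S :: "'a op"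
  assumes "bij_betw (\<lambda>x. the (S x)) (dom S) UNIV"
  shows "S = inverse_op (inv_into (dom S) (\<lambda>x. the (S x)))"
proof
  let ?P = "inv_into (dom S) (\<lambda>x. the (S x))"
  have bij: "bij_betw ?P UNIV (dom S)" by (rule bij_betw_inv_into[OF assms])
  fix y
  show "S y = inverse_op ?P y"
  proof (cases "y \<in> dom S")
    case True
    then have "?P (the (S y)) = y" by (rule inv_into_f_f[OF bij_betw_imp_inj_on[OF assms]])
    then have "inverse_op ?P y = Some (the (S y))"
      by (metis inverse_op_apply bij bij_betw_imp_inj_on)
    with True show ?thesis by (auto simp: domIff)
  next
    case False
    then show ?thesis using bij_betw_imp_surj_on[OF bij] by (auto simp: inverse_op_def domIff)
  qed
qed

lemma bij_betw_lin_op_square_eq_inverse_op: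
  fixes S :: "'a::complex_inner op"
  assumes lin: "lin_op S" and "clinear A" and "inj A" and SS: "S \<circ>\<^sub>m S = inverse_op A"
  shows "bij_betw (\<lambda>x. the (S x)) (dom S) UNIV"
proof (rule bij_betw_imageI)
  have "x \<in> (\<lambda>x. the (S x)) ` dom S" for x
  proof -
    have "(S \<circ>\<^sub>m S) (A x) = Some x" using SS inverse_op_apply[OF \<open>inj A\<close>] by simp
    then obtain w where "S (A x) = Some w" "S w = Some x" by (auto simp: map_comp_def split: option.splits)
    then show ?thesis by (force simp: domIff)
  qed
  then show "(\<lambda>x. the (S x)) ` dom S = UNIV" by blast
  show "inj_on (\<lambda>x. the (S x)) (dom S)"
  proof (rule inj_onI)
    fix z1 z2 assume z: "z1 \<in> dom S" "z2 \<in> dom S" "the (S z1) = the (S z2)"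
    have minus: "scaleC (-1) z2 \<in> dom S" "the (S (scaleC (-1) z2)) = scaleC (-1) (the (S z2))"
      using lin z(2) unfolding lin_op_def by blast+
    then have "z1 + scaleC (-1) z2 \<in> dom S"
      "the (S (z1 + scaleC (-1) z2)) = the (S z1) + the (S (scaleC (-1) z2))"
      using lin z(1) unfolding lin_op_def by blast+
    then have "z1 - z2 \<in> dom S" "the (S (z1 - z2)) = 0"
      using minus z(3) by (simp_all add: scaleC_of_real[of "-1", simplified])
    moreover have "S 0 = Some 0"
      using lin unfolding lin_op_def by (metis domIff option.collapse scaleC_zero_left)
    ultimately have "(S \<circ>\<^sub>m S) (z1 - z2) = Some 0"
      by (auto simp: domIff map_comp_def)
    then have "z1 - z2 \<in> range A" "inv A (z1 - z2) = 0" using SS by (auto simp: inverse_op_def split: if_splits)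
    then have "z1 - z2 = A 0" by (metis f_inv_into_f)
    then show "z1 = z2" using clinear_zero[OF \<open>clinear A\<close>] by simp
  qed
qed

lemma lin_op_square_eq_inverse_op:
  fixes S :: "'a::complex_inner op"
  assumes lin: "lin_op S" and "clinear A" and "inj A" and SS: "S \<circ>\<^sub>m S = inverse_op A"
  obtains P where "S = inverse_op P" "inj P" "clinear P" "\<And>x. P (P x) = A x"
proof
  define P where "P = inv_into (dom S) (\<lambda>x. the (S x))"
  have bij: "bij_betw (\<lambda>x. the (S x)) (dom S) UNIV"
    by (rule bij_betw_lin_op_square_eq_inverse_op[OF assms])
  have Pd: "P x \<in> dom S" and Pthe: "the (S (P x)) = x" for x
    using bij_betw_inv_into_left[OF bij_betw_inv_into[OF bij]] bij_betw_inv_into_right[OF bij]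
      bij_betw_apply[OF bij_betw_inv_into[OF bij]]
    by (simp_all add: P_def)
  have Puniq: "z \<in> dom S \<Longrightarrow> the (S z) = x \<Longrightarrow> P x = z" for z x
    unfolding P_def using inv_into_f_f[OF bij_betw_imp_inj_on[OF bij]] by blast
  show "S = inverse_op P" unfolding P_def by (rule inverse_op_inv_into[OF bij])
  show "inj P" by (rule injI) (metis Pthe)
  show "clinear P"
    unfolding clinear_def
  proof (intro conjI allI)
    show "P (x + y) = P x + P y" for x y
      using lin Pd Pthe by (intro Puniq) (simp_all add: lin_op_def)
    show "P (scaleC a x) = scaleC a (P x)" for a x
      using lin Pd Pthe by (intro Puniq) (simp_all add: lin_op_def)
  qed
  show "P (P x) = A x" for x
  proof -
    have PS: "S (P y) = Some y" for y using Pd[of y] Pthe[of y] by (auto simp: domIff)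
    have "S (P (P x)) = Some (P x)" "S (P x) = Some x" by (rule PS)+
    then have "inverse_op A (P (P x)) = Some x" using SS by (metis map_comp_simps(2))
    then have "P (P x) \<in> range A" "inv A (P (P x)) = x" by (auto simp: inverse_op_def split: if_splits)
    then show ?thesis by (metis f_inv_into_f)
  qed
qed

lemma bounded_positive_if_inverse_op:
  fixes P :: "'a::complex_inner \<Rightarrow> 'a"
  assumes sa: "self_adjoint_op (inverse_op P)" and pos: "positive_op (inverse_op P)" and "inj P"
    and PP: "\<And>x. P (P x) = A x" and A: "bounded_positive A" and lP: "clinear P"
  shows "bounded_positive P"
proof -
  have Pd: "P x \<in> dom (inverse_op P)" and Pthe: "the (inverse_op P (P x)) = x" for x
    using \<open>inj P\<close> by (simp_all add: dom_inverse_op the_inverse_op_apply)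
  have sP: "hermitian P"
    unfolding hermitian_def using self_adjoint_op_symmetric[OF sa Pd Pd] by (metis Pthe)
  have pP: "positive_map P"
  proof -
    have "0 \<le> Re (cinner x (P x))" for x
    proof -
      have "\<exists>r\<ge>0. cinner (P x) (the (inverse_op P (P x))) = complex_of_real r"
        using pos Pd[of x] by (simp add: positive_op_def)
      then obtain r where "r \<ge> 0" "cinner (P x) x = complex_of_real r" unfolding Pthe by blast
      then show ?thesis using cinner_conj[of x "P x"] by simp
    qed
    then show ?thesis by (simp add: positive_map_def)
  qed
  have "bounded_map P"
  proof -
    obtain c where "c > 0" and c: "\<And>x. norm (A x) \<le> c * norm x"
      using A bounded_map_pos_bound by (auto simp: bounded_positive_def)
    have "norm (P x) \<le> sqrt c * norm x" for x
    proof -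
      have "(norm (P x))\<^sup>2 = Re (cinner x (A x))" using sP by (simp add: hermitian_def PP flip: Re_cinner_self)
      also have "\<dots> \<le> norm x * norm (A x)"
        using complex_Re_le_cmod cinner_Cauchy_Schwarz by (rule order_trans)
      also have "\<dots> \<le> norm x * (c * norm x)" by (rule mult_left_mono[OF c]) simp
      also have "\<dots> = (sqrt c * norm x)\<^sup>2" using \<open>c > 0\<close> by (simp add: power2_eq_square power_mult_distrib)
      finally show ?thesis using \<open>c > 0\<close> by (simp add: power2_le_iff_abs_le)
    qed
    then show ?thesis by (auto simp: bounded_map_def)
  qed
  with lP sP pP show ?thesis by (simp add: bounded_positive_def)
qed

text \<open>As \<open>op_sqrt\<close> is a definite description, the root has to be unique among all positive
  self-adjoint (possibly unbounded) roots, not only among the bounded ones.\<close>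
lemma op_sqrt_inverse_op:
  fixes A :: "'a::chilbert \<Rightarrow> 'a"
  assumes A: "bounded_positive A" and i: "inj A" and d: "closure (range A) = UNIV"
  shows "op_sqrt (inverse_op A) = inverse_op (pos_sqrt A)"
  unfolding op_sqrt_def
proof (rule the_equality)
  let ?R = "pos_sqrt A"
  have lR: "clinear ?R" "hermitian ?R" "positive_map ?R"
    using bounded_positive_pos_sqrt[OF A] by (auto simp: bounded_positive_def)
  note iR = pos_sqrt_inj_dense[OF A i d]
  have "(\<lambda>x. ?R (?R x)) = A" using pos_sqrt_square[OF A] by auto
  then show "self_adjoint_op (inverse_op ?R) \<and> positive_op (inverse_op ?R) \<and> inverse_op ?R \<circ>\<^sub>m inverse_op ?R = inverse_op A"
    using self_adjoint_inverse_op[OF lR(1,2) iR(1,2)] positive_op_inverse_op[OF lR(2,3) iR(1)] inverse_op_square[OF iR(1)]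
    by simp
next
  fix S assume S: "self_adjoint_op S \<and> positive_op S \<and> S \<circ>\<^sub>m S = inverse_op A"
  have "clinear A" using A by (simp add: bounded_positive_def)
  obtain P where P: "S = inverse_op P" "inj P" "clinear P" "\<And>x. P (P x) = A x"
    using lin_op_square_eq_inverse_op[OF _ \<open>clinear A\<close> i] S by (auto simp: self_adjoint_op_def)
  have "bounded_positive P" using bounded_positive_if_inverse_op[of P A] S P A by simp
  then show "S = inverse_op (pos_sqrt A)" using pos_sqrt_unique[OF A _ P(4)] P(1) by simp
qed

section \<open>Self-adjoint operators with bounded inverse\<close>

locale invertible_self_adjoint =
  fixes W :: "'a::chilbert op"
  assumes sa: "self_adjoint_op W" and zero_res: "0 \<notin> op_spectrum W"
begin

lemma bij_W: "bij_betw (\<lambda>x. the (W x)) (dom W) UNIV"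
  and bounded_inverse_W: "\<exists>C. \<forall>x\<in>dom W. norm x \<le> C * norm (the (W x))"
  using zero_res by (auto simp: op_spectrum_def)

definition T :: "'a \<Rightarrow> 'a" where
  "T = inv_into (dom W) (\<lambda>x. the (W x))"

lemma T_in_dom: "T y \<in> dom W"
  unfolding T_def by (rule inv_into_into) (simp add: bij_betw_imp_surj_on[OF bij_W])

lemma W_T: "the (W (T y)) = y"
  unfolding T_def by (rule f_inv_into_f) (simp add: bij_betw_imp_surj_on[OF bij_W])

lemma T_W: "x \<in> dom W \<Longrightarrow> T (the (W x)) = x"
  unfolding T_def by (rule inv_into_f_f[OF bij_betw_imp_inj_on[OF bij_W]])

lemma inj_T: "inj T"
  by (rule injI) (metis W_T)

lemma range_T: "range T = dom W"
proof
  show "dom W \<subseteq> range T"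
  proof
    fix x assume "x \<in> dom W"
    then have "x = T (the (W x))" by (simp add: T_W)
    then show "x \<in> range T" by (rule image_eqI) simp
  qed
qed (use T_in_dom in auto)

lemma W_eq_inverse_op_T: "W = inverse_op T"
proof
  fix y
  show "W y = inverse_op T y"
  proof (cases "y \<in> dom W")
    case True
    then have "inverse_op T y = Some (the (W y))" by (metis T_W inverse_op_apply[OF inj_T])
    then show ?thesis using True by (auto simp: domIff)
  next
    case False
    then show ?thesis using range_T by (auto simp: inverse_op_def domIff)
  qed
qed

lemma clinear_T: "clinear T"
proof -
  have lin: "lin_op W" using sa by (simp add: self_adjoint_op_def)
  have "T a + T b \<in> dom W" "the (W (T a + T b)) = a + b" for a b
    using lin T_in_dom W_T by (auto simp: lin_op_def)
  moreover have "scaleC c (T a) \<in> dom W" "the (W (scaleC c (T a))) = scaleC c a" for c a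
    using lin T_in_dom W_T by (auto simp: lin_op_def)
  ultimately show ?thesis unfolding clinear_def by (metis T_W)
qed

lemma bounded_map_T: "bounded_map T"
proof -
  obtain C where C: "\<And>x. x \<in> dom W \<Longrightarrow> norm x \<le> C * norm (the (W x))"
    using bounded_inverse_W by auto
  have "norm (T y) \<le> C * norm y" for y using C[OF T_in_dom[of y]] by (simp add: W_T)
  then show ?thesis by (auto simp: bounded_map_def)
qed

lemma hermitian_T: "hermitian T"
  unfolding hermitian_def using self_adjoint_op_symmetric[OF sa T_in_dom T_in_dom] by (metis W_T)

definition T_sq :: "'a \<Rightarrow> 'a" where
  "T_sq x = T (T x)"

lemma bounded_positive_T_sq: "bounded_positive T_sq"
proof -
  have "cinner x (T (T x)) = cinner (T x) (T x)" for x
    using hermitian_T by (simp add: hermitian_def)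
  then have "positive_map T_sq" by (simp add: positive_map_def T_sq_def Re_cinner_self)
  then show ?thesis
    using clinear_compose[OF clinear_T clinear_T] bounded_map_compose[OF bounded_map_T bounded_map_T] hermitian_T
    by (simp add: bounded_positive_def T_sq_def [abs_def] hermitian_def)
qed

lemma inj_T_sq: "inj T_sq"
  using inj_T by (simp add: inj_def T_sq_def)

lemma continuous_on_T: "continuous_on S T"
  by (rule clinear_bounded_map_continuous_on[OF clinear_T bounded_map_T])

lemma range_T_sq_dense: "closure (range T_sq) = UNIV"
proof -
  have dense: "closure (dom W) = UNIV" using sa by (simp add: self_adjoint_op_def)
  have "T ` closure (dom W) \<subseteq> closure (range T_sq)"
    by (rule image_closure_subset[OF continuous_on_T])
      (auto simp: T_sq_def simp flip: range_T intro: closure_subset[THEN subsetD])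
  then have "dom W \<subseteq> closure (range T_sq)" using dense range_T by simp
  then show ?thesis using dense by (metis closure_closure closure_mono top.extremum_uniqueI)
qed

definition M :: "'a \<Rightarrow> 'a" where
  "M = pos_sqrt T_sq"

lemma op_abs_W: "op_abs W = inverse_op M"
proof -
  have "W \<circ>\<^sub>m W = inverse_op T_sq"
    using inverse_op_square[OF inj_T] unfolding T_sq_def [abs_def] W_eq_inverse_op_T [symmetric] .
  then show ?thesis
    unfolding op_abs_def M_def by (simp add: op_sqrt_inverse_op[OF bounded_positive_T_sq inj_T_sq range_T_sq_dense])
qed

lemma bounded_positive_M: "bounded_positive M" and M_M: "M (M x) = T (T x)"
  using bounded_positive_pos_sqrt[OF bounded_positive_T_sq] pos_sqrt_square[OF bounded_positive_T_sq]
  by (simp_all add: M_def T_sq_def)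

lemma inj_M: "inj M" and range_M_dense: "closure (range M) = UNIV"
  using pos_sqrt_inj_dense[OF bounded_positive_T_sq inj_T_sq range_T_sq_dense] by (simp_all add: M_def)

definition K :: "'a \<Rightarrow> 'a" where
  "K = pos_sqrt M"

lemma krein_S_W: "krein_S W = inverse_op K"
  unfolding krein_S_def op_abs_W K_def by (rule op_sqrt_inverse_op[OF bounded_positive_M inj_M range_M_dense])

lemma bounded_positive_K: "bounded_positive K" and K_K: "K (K x) = M x"
  using bounded_positive_pos_sqrt[OF bounded_positive_M] pos_sqrt_square[OF bounded_positive_M]
  by (simp_all add: K_def)

lemma inj_K: "inj K" and range_K_dense: "closure (range K) = UNIV"
  using pos_sqrt_inj_dense[OF bounded_positive_M inj_M range_M_dense] by (simp_all add: K_def)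

lemma clinear_M: "clinear M" and bounded_map_M: "bounded_map M" and hermitian_M: "hermitian M"
  using bounded_positive_M by (simp_all add: bounded_positive_def)

lemma clinear_K: "clinear K" and bounded_map_K: "bounded_map K" and hermitian_K: "hermitian K"
  using bounded_positive_K by (simp_all add: bounded_positive_def)

lemma T_M_commute: "T (M x) = M (T x)"
  unfolding M_def by (rule pos_sqrt_commute[OF bounded_positive_T_sq clinear_T bounded_map_T]) (simp add: T_sq_def)

lemma T_K_commute: "T (K x) = K (T x)"
  unfolding K_def by (rule pos_sqrt_commute[OF bounded_positive_M clinear_T bounded_map_T T_M_commute])

lemma M_K_commute: "M (K x) = K (M x)"
  unfolding K_def by (rule pos_sqrt_commute[OF bounded_positive_M clinear_M bounded_map_M]) simp

lemma norm_T_eq_norm_M: "norm (T u) = norm (M u)"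
proof -
  have "(norm (T u))\<^sup>2 = Re (cinner (T u) (T u))" by (simp add: Re_cinner_self)
  also have "\<dots> = Re (cinner u (T (T u)))" using hermitian_T by (simp add: hermitian_def)
  also have "\<dots> = Re (cinner (M u) (M u))" using hermitian_M by (simp add: hermitian_def M_M)
  also have "\<dots> = (norm (M u))\<^sup>2" by (simp add: Re_cinner_self)
  finally show ?thesis by (simp add: power2_eq_iff_nonneg)
qed

lemma continuous_on_K: "continuous_on S K"
  by (rule clinear_bounded_map_continuous_on[OF clinear_K bounded_map_K])

lemma continuous_on_M: "continuous_on S M"
  by (rule clinear_bounded_map_continuous_on[OF clinear_M bounded_map_M])

text \<open>\<open>M u \<mapsto> T u\<close> is well defined and isometric on the dense set \<open>range M\<close> since
  \<open>\<parallel>T u\<parallel> = \<parallel>M u\<parallel>\<close>.\<close>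
lemma fundamental_symmetry_exists: "\<exists>g. continuous_on UNIV g \<and> (\<forall>u. g (M u) = T u)"
proof -
  let ?V = "\<lambda>y. T (inv M y)"
  have isometric: "dist (?V (M a)) (?V (M b)) = dist (M a) (M b)" for a b
  proof -
    have "dist (?V (M a)) (?V (M b)) = norm (T a - T b)" using inj_M by (simp add: dist_norm)
    also have "\<dots> = norm (T (a - b))" by (simp add: clinear_diff[OF clinear_T])
    also have "\<dots> = norm (M (a - b))" by (rule norm_T_eq_norm_M)
    also have "\<dots> = dist (M a) (M b)" by (simp add: clinear_diff[OF clinear_M] dist_norm)
    finally show ?thesis .
  qed
  have uc: "uniformly_continuous_on (range M) ?V"
    unfolding uniformly_continuous_on_def
  proof (intro allI impI)
    fix e :: real assume "e > 0"
    then show "\<exists>d>0. \<forall>x\<in>range M. \<forall>x'\<in>range M. dist x' x < d \<longrightarrow> dist (?V x') (?V x) < e"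
      using isometric by (intro exI[of _ e]) auto
  qed
  obtain g where g: "uniformly_continuous_on (closure (range M)) g" "\<And>x. x \<in> range M \<Longrightarrow> ?V x = g x"
    using uniformly_continuous_on_extension_on_closure[OF uc] by metis
  have "continuous_on UNIV g" using uniformly_continuous_imp_continuous[OF g(1)] range_M_dense by simp
  moreover have "g (M u) = T u" for u using g(2)[of "M u"] inj_M by simp
  ultimately show ?thesis by blast
qed

definition J :: "'a \<Rightarrow> 'a" where
  "J = (SOME g. continuous_on UNIV g \<and> (\<forall>u. g (M u) = T u))"

lemma continuous_J: "continuous_on UNIV J" and J_M_eq_T: "J (M u) = T u"
  using someI_ex[OF fundamental_symmetry_exists] by (auto simp: J_def)

lemma eq_if_eq_on_range_M:
  fixes f g :: "'a \<Rightarrow> 'b::t2_space"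
  assumes "continuous_on UNIV f" "continuous_on UNIV g" "\<And>u. f (M u) = g (M u)"
  shows "f y = g y"
  by (rule continuous_on_eq_dense[OF assms(1,2) range_M_dense]) (use assms(3) in auto)

lemma norm_J: "norm (J y) = norm y"
  using eq_if_eq_on_range_M[of "\<lambda>y. norm (J y)" norm] continuous_J
  by (simp add: continuous_on_norm continuous_on_id J_M_eq_T norm_T_eq_norm_M)

lemma J_K_commute: "J (K y) = K (J y)"
proof (rule eq_if_eq_on_range_M[where f = "\<lambda>y. J (K y)" and g = "\<lambda>y. K (J y)"])
  show "continuous_on UNIV (\<lambda>y. J (K y))" "continuous_on UNIV (\<lambda>y. K (J y))"
    by (intro continuous_on_compose2[OF continuous_J continuous_on_K subset_UNIV]
        continuous_on_compose2[OF continuous_on_K continuous_J subset_UNIV])+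
  show "J (K (M u)) = K (J (M u))" for u
    by (simp add: M_K_commute [symmetric] J_M_eq_T T_K_commute)
qed

lemma J_J: "J (J y) = y"
proof (rule continuous_on_eq_dense[OF _ continuous_on_id range_T_sq_dense])
  show "continuous_on UNIV (\<lambda>y. J (J y))"
    by (rule continuous_on_compose2[OF continuous_J continuous_J subset_UNIV])
  show "J (J x) = x" if "x \<in> range T_sq" for x
    using that by (auto simp: T_sq_def J_M_eq_T T_M_commute simp flip: M_M)
qed

lemma J_M_commute: "J (M y) = M (J y)"
proof (rule eq_if_eq_on_range_M[where f = "\<lambda>y. J (M y)" and g = "\<lambda>y. M (J y)"])
  show "continuous_on UNIV (\<lambda>y. J (M y))" "continuous_on UNIV (\<lambda>y. M (J y))"
    by (intro continuous_on_compose2[OF continuous_J continuous_on_M subset_UNIV]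
        continuous_on_compose2[OF continuous_on_M continuous_J subset_UNIV])+
  show "J (M (M u)) = M (J (M u))" for u
    by (simp add: J_M_eq_T T_M_commute)
qed

lemma T_eq_M_J: "T c = M (J c)"
  using J_M_eq_T J_M_commute by simp

lemma T_eq_K_J_K: "T c = K (J (K c))"
  using J_M_eq_T[of c] K_K[of c] J_K_commute[of "K c"] by simp

lemma dom_W_subset_range_K: "dom W \<subseteq> range K"
  by (auto simp: T_eq_K_J_K simp flip: range_T)

end

section \<open>The Krein space realised on the domain of \<open>sqrt |W|\<close>\<close>

context invertible_self_adjoint
begin

lemma dom_krein_S: "dom (krein_S W) = range K"
  by (simp add: krein_S_W dom_inverse_op)

lemma the_krein_S_K: "the (krein_S W (K a)) = a"
  by (simp add: krein_S_W the_inverse_op_apply[OF inj_K])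

lemma the_krein_S: "x \<in> dom (krein_S W) \<Longrightarrow> the (krein_S W x) = inv K x"
  by (metis dom_krein_S the_krein_S_K f_inv_into_f)

lemma the_krein_S_diff:
  "x \<in> dom (krein_S W) \<Longrightarrow> y \<in> dom (krein_S W) \<Longrightarrow> the (krein_S W (x - y)) = inv K x - inv K y"
  using the_krein_S_K[of "inv K x - inv K y"]
  by (simp add: clinear_diff[OF clinear_K] dom_krein_S f_inv_into_f)

lemma dom_W_subset_dom_krein_S: "dom W \<subseteq> dom (krein_S W)"
  using dom_W_subset_range_K by (simp add: dom_krein_S)

lemma krein_S_complete:
  assumes xs: "\<forall>n. xs n \<in> dom (krein_S W)"
    and Cauchy: "\<forall>e>0. \<exists>N. \<forall>m\<ge>N. \<forall>n\<ge>N. norm (the (krein_S W (xs m - xs n))) < e"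
  shows "\<exists>x\<in>dom (krein_S W). (\<lambda>n. norm (the (krein_S W (xs n - x)))) \<longlonglongrightarrow> 0"
proof -
  have "Cauchy (\<lambda>n. inv K (xs n))"
    using Cauchy xs by (intro CauchyI) (simp add: the_krein_S_diff)
  then obtain l where l: "(\<lambda>n. inv K (xs n)) \<longlonglongrightarrow> l"
    by (auto simp: Cauchy_convergent_iff convergent_def)
  have Kl: "K l \<in> dom (krein_S W)" by (simp add: dom_krein_S)
  have "(\<lambda>n. norm (the (krein_S W (xs n - K l)))) = (\<lambda>n. norm (inv K (xs n) - l))"
    using xs inj_K by (simp add: the_krein_S_diff[OF _ Kl])
  moreover have "(\<lambda>n. norm (inv K (xs n) - l)) \<longlonglongrightarrow> 0"
    using l by (intro tendsto_norm_zero LIM_zero)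
  ultimately have "(\<lambda>n. norm (the (krein_S W (xs n - K l)))) \<longlonglongrightarrow> 0" by simp
  with Kl show ?thesis by blast
qed

text \<open>Approximate \<open>J a\<close> by \<open>K c\<^sub>n\<close>; then \<open>T c\<^sub>n = K (J (K c\<^sub>n)) \<in> dom W\<close> and
  \<open>J (K c\<^sub>n) \<longrightarrow> J (J a) = a\<close>.\<close>
lemma dom_W_approximates:
  assumes "x \<in> dom (krein_S W)"
  obtains fs where "\<forall>n. fs n \<in> dom W" "(\<lambda>n. inv K (fs n)) \<longlonglongrightarrow> inv K x"
proof -
  have "J (inv K x) \<in> closure (range K)" using range_K_dense by simp
  then obtain z where z: "\<forall>n. z n \<in> range K" "z \<longlonglongrightarrow> J (inv K x)"
    by (auto simp: closure_sequential)
  define fs where "fs n = T (inv K (z n))" for n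
  have "inv K (fs n) = J (z n)" for n
    using inj_K z(1) by (simp add: fs_def T_eq_K_J_K f_inv_into_f)
  moreover have "(\<lambda>n. J (z n)) \<longlonglongrightarrow> J (J (inv K x))"
    using continuous_on_tendsto_compose[OF continuous_J z(2)] by simp
  ultimately have "(\<lambda>n. inv K (fs n)) \<longlonglongrightarrow> inv K x" by (simp add: J_J)
  moreover have "\<forall>n. fs n \<in> dom W" by (simp add: fs_def T_in_dom)
  ultimately show ?thesis using that by blast
qed

lemma dom_W_dense_in_dom_krein_S:
  assumes "x \<in> dom (krein_S W)" "e > 0"
  shows "\<exists>y\<in>dom W. norm (the (krein_S W (x - y))) < e"
proof -
  obtain fs where fs: "\<forall>n. fs n \<in> dom W" "(\<lambda>n. inv K (fs n)) \<longlonglongrightarrow> inv K x"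
    using dom_W_approximates[OF assms(1)] .
  then obtain n where "dist (inv K (fs n)) (inv K x) < e"
    using \<open>e > 0\<close> by (metis LIMSEQ_iff_nz dist_norm order_refl)
  moreover have "fs n \<in> dom (krein_S W)" using fs(1) dom_W_subset_dom_krein_S by blast
  ultimately show ?thesis
    using fs(1) assms(1) by (metis the_krein_S_diff dist_norm norm_minus_commute)
qed

text \<open>Convergence in the transported norm means \<open>inv K (fs n) \<longrightarrow> inv K f\<close>; as such
  sequences in \<open>dom W\<close> exist, the description in \<open>ext_form\<close> has exactly one solution.\<close>
lemma ext_form_eqI:
  assumes f: "f \<in> dom (krein_S W)" and g: "g \<in> dom (krein_S W)"
    and lim: "\<And>fs gs. \<forall>n. fs n \<in> dom W \<and> gs n \<in> dom W \<Longrightarrow>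
      (\<lambda>n. inv K (fs n)) \<longlonglongrightarrow> inv K f \<Longrightarrow> (\<lambda>n. inv K (gs n)) \<longlonglongrightarrow> inv K g \<Longrightarrow>
      (\<lambda>n. \<phi> (fs n) (gs n)) \<longlonglongrightarrow> c"
  shows "ext_form W \<phi> f g = c"
  unfolding ext_form_def
proof (rule the_equality)
  have conv: "(\<lambda>n. inv K (hs n)) \<longlonglongrightarrow> inv K h"
    if "\<forall>n. hs n \<in> dom W" "h \<in> dom (krein_S W)" "(\<lambda>n. norm (the (krein_S W (hs n - h)))) \<longlonglongrightarrow> 0" for hs h
    using that dom_W_subset_dom_krein_S
    by (simp add: the_krein_S_diff subset_iff LIM_zero_iff tendsto_norm_zero_iff)
  show "\<forall>fs gs. (\<forall>n. fs n \<in> dom W \<and> gs n \<in> dom W) \<and>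
      (\<lambda>n. norm (the (krein_S W (fs n - f)))) \<longlonglongrightarrow> 0 \<and>
      (\<lambda>n. norm (the (krein_S W (gs n - g)))) \<longlonglongrightarrow> 0 \<longrightarrow> (\<lambda>n. \<phi> (fs n) (gs n)) \<longlonglongrightarrow> c"
    using conv[OF _ f] conv[OF _ g] lim by blast
  fix c' assume c': "\<forall>fs gs. (\<forall>n. fs n \<in> dom W \<and> gs n \<in> dom W) \<and>
      (\<lambda>n. norm (the (krein_S W (fs n - f)))) \<longlonglongrightarrow> 0 \<and>
      (\<lambda>n. norm (the (krein_S W (gs n - g)))) \<longlonglongrightarrow> 0 \<longrightarrow> (\<lambda>n. \<phi> (fs n) (gs n)) \<longlonglongrightarrow> c'"
  have approx: "\<exists>hs. (\<forall>n. hs n \<in> dom W) \<and> (\<lambda>n. norm (the (krein_S W (hs n - h)))) \<longlonglongrightarrow> 0"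
    if h: "h \<in> dom (krein_S W)" for h
  proof -
    obtain hs where hs: "\<forall>n. hs n \<in> dom W" "(\<lambda>n. inv K (hs n)) \<longlonglongrightarrow> inv K h"
      using dom_W_approximates[OF h] .
    then have "(\<lambda>n. norm (the (krein_S W (hs n - h)))) \<longlonglongrightarrow> 0"
      using h dom_W_subset_dom_krein_S
      by (simp add: the_krein_S_diff subset_iff LIM_zero_iff tendsto_norm_zero_iff)
    with hs(1) show ?thesis by blast
  qed
  obtain fs where fs: "\<forall>n. fs n \<in> dom W" "(\<lambda>n. norm (the (krein_S W (fs n - f)))) \<longlonglongrightarrow> 0"
    using approx[OF f] by blast
  obtain gs where gs: "\<forall>n. gs n \<in> dom W" "(\<lambda>n. norm (the (krein_S W (gs n - g)))) \<longlonglongrightarrow> 0"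
    using approx[OF g] by blast
  have "(\<lambda>n. \<phi> (fs n) (gs n)) \<longlonglongrightarrow> c'" using c' fs gs by blast
  moreover have "(\<lambda>n. \<phi> (fs n) (gs n)) \<longlonglongrightarrow> c" using lim conv[OF fs(1) f fs(2)] conv[OF gs(1) g gs(2)] fs gs by blast
  ultimately show "c' = c" by (rule LIMSEQ_unique)
qed

lemma cinner_op_abs_W:
  assumes "f \<in> dom W" "g \<in> dom W"
  shows "cinner f (the (op_abs W g)) = cinner (inv K f) (inv K g)"
proof -
  obtain a c where f: "f = K a" and g: "g = T c" using assms dom_W_subset_range_K range_T by blast
  have "the (op_abs W g) = J c" by (simp add: op_abs_W g T_eq_M_J the_inverse_op_apply[OF inj_M])
  moreover have "inv K g = K (J c)" using inj_K by (simp add: g T_eq_M_J K_K [symmetric])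
  ultimately show ?thesis using hermitian_K inj_K by (simp add: f hermitian_def)
qed

lemma cinner_W:
  assumes "f \<in> dom W" "g \<in> dom W"
  shows "cinner f (the (W g)) = cinner (inv K f) (J (inv K g))"
proof -
  obtain a c where f: "f = K a" and g: "g = T c" using assms dom_W_subset_range_K range_T by blast
  have "J (inv K g) = K c" using inj_K by (simp add: g T_eq_K_J_K J_J)
  then show ?thesis using hermitian_K inj_K by (simp add: f g W_T hermitian_def)
qed

lemma krein_Jip_eq:
  "f \<in> dom (krein_S W) \<Longrightarrow> g \<in> dom (krein_S W) \<Longrightarrow> krein_Jip W f g = cinner (inv K f) (inv K g)"
  unfolding krein_Jip_def by (rule ext_form_eqI) (simp_all add: cinner_op_abs_W tendsto_cinner)

lemma krein_ip_eq:
  "f \<in> dom (krein_S W) \<Longrightarrow> g \<in> dom (krein_S W) \<Longrightarrow> krein_ip W f g = cinner (inv K f) (J (inv K g))"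
  unfolding krein_ip_def
  by (rule ext_form_eqI) (simp_all add: cinner_W tendsto_cinner continuous_on_tendsto_compose[OF continuous_J])

lemma norm_krein_S_eq_krein_Jnorm: "h \<in> dom W \<Longrightarrow> norm (the (krein_S W h)) = krein_Jnorm W h"
  using subsetD[OF dom_W_subset_dom_krein_S]
  by (simp add: krein_Jnorm_def cinner_op_abs_W the_krein_S Re_cinner_self)

lemma bij_krein_S: "bij_betw (\<lambda>x. the (krein_S W x)) (dom (krein_S W)) UNIV"
  unfolding dom_krein_S
  by (rule bij_betw_byWitness[where f' = K]) (auto simp: the_krein_S_K)

lemma cinner_krein_S:
  "f \<in> dom (krein_S W) \<Longrightarrow> g \<in> dom (krein_S W) \<Longrightarrow>
     cinner (the (krein_S W f)) (the (krein_S W g)) = krein_Jip W f g"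
  by (simp add: the_krein_S krein_Jip_eq)

text \<open>Under \<open>k = K a\<close>, \<open>[K h, k] = \<langle>h, J a\<rangle>\<close> and \<open>\<parallel>k\<parallel>_J = \<parallel>J a\<parallel>\<close>; as \<open>J\<close> is a bijection the
  frame condition on all \<open>J a\<close> is the frame condition on all of \<open>\<H>\<close>.\<close>
lemma hilbert_frame_iff_krein_frame:
  "hilbert_frame ks A B \<longleftrightarrow>
     krein_frame W (\<lambda>n. inv_into (dom (krein_S W)) (\<lambda>x. the (krein_S W x)) (ks n)) A B"
proof -
  have inv_krein_S: "inv_into (dom (krein_S W)) (\<lambda>x. the (krein_S W x)) y = K y" for y
    by (rule inv_into_f_eq[OF bij_betw_imp_inj_on[OF bij_krein_S]]) (simp_all add: dom_krein_S the_krein_S_K)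
  let ?Q = "\<lambda>f. summable (\<lambda>n. (cmod (cinner (ks n) f))\<^sup>2) \<and>
          A * (norm f)\<^sup>2 \<le> (\<Sum>n. (cmod (cinner (ks n) f))\<^sup>2) \<and>
          (\<Sum>n. (cmod (cinner (ks n) f))\<^sup>2) \<le> B * (norm f)\<^sup>2"
  have "krein_ip W (K (ks n)) (K a) = cinner (ks n) (J a)" "krein_Jnorm_ext W (K a) = norm (J a)" for n a
    using inj_K by (simp_all add: krein_ip_eq krein_Jnorm_ext_def krein_Jip_eq dom_krein_S norm_J Re_cinner_self)
  then have "krein_frame W (\<lambda>n. K (ks n)) A B \<longleftrightarrow> 0 < A \<and> A \<le> B \<and> (\<forall>a. ?Q (J a))"
    unfolding krein_frame_def dom_krein_S by auto
  moreover have "(\<forall>a. ?Q (J a)) \<longleftrightarrow> (\<forall>f. ?Q f)"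
    by (metis J_J)
  ultimately show ?thesis unfolding inv_krein_S hilbert_frame_def by blast
qed

end

theorem theorem4p3:
  fixes W :: "'a::chilbert op"
  assumes separable: "\<exists>D::'a set. countable D \<and> closure D = UNIV"
    and sa: "self_adjoint_op W"
    and zero_res: "0 \<notin> op_spectrum W"
  shows
    "(\<forall>xs. (\<forall>n. xs n \<in> dom (krein_S W)) \<and>
        (\<forall>e>0. \<exists>N. \<forall>m\<ge>N. \<forall>n\<ge>N. norm (the (krein_S W (xs m - xs n))) < e) \<longrightarrow>
        (\<exists>x\<in>dom (krein_S W). (\<lambda>n. norm (the (krein_S W (xs n - x)))) \<longlonglongrightarrow> 0))
     \<and> dom W \<subseteq> dom (krein_S W)
     \<and> (\<forall>x\<in>dom (krein_S W). \<forall>e>0. \<exists>y\<in>dom W. norm (the (krein_S W (x - y))) < e)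
     \<and> (\<forall>h\<in>dom W. norm (the (krein_S W h)) = krein_Jnorm W h)
     \<and> bij_betw (\<lambda>x. the (krein_S W x)) (dom (krein_S W)) UNIV
     \<and> (\<forall>f\<in>dom (krein_S W). \<forall>g\<in>dom (krein_S W).
          cinner (the (krein_S W f)) (the (krein_S W g)) = krein_Jip W f g)
     \<and> (\<forall>(ks::nat \<Rightarrow> 'a) A B. hilbert_frame ks A B \<longleftrightarrow>
          krein_frame W (\<lambda>n. inv_into (dom (krein_S W)) (\<lambda>x. the (krein_S W x)) (ks n)) A B)"
proof -
  interpret invertible_self_adjoint W using sa zero_res by unfold_locales
  show ?thesis
    using krein_S_complete dom_W_subset_dom_krein_S dom_W_dense_in_dom_krein_S
      norm_krein_S_eq_krein_Jnorm bij_krein_S cinner_krein_S hilbert_frame_iff_krein_frame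
    by blast
qed

end
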